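(* Let $d\ge 2$, $n\ge1$, $0\le k<n$ be integers. The number $N(n,k,d)$ of $[[n,k]]_d$ stabilizer codes equals $$N(n,k,d)=\frac{|\mathrm{Sp}(2n,\mathbb{Z}_d)|}{|T(n,k,d)|},$$ where $T(n,k,d)$ is the set of all $M\in\mathrm{Sp}(2n,\mathbb{Z}_d)$ which, in block form with respect to the partition of rows and columns into consecutive blocks of sizes $(n-k,k,n-k,k)$, have the form $$M=\begin{pmatrix}(A^T)^{-1}&0&0&0\\ M_{21}&M_{22}&0&M_{24}\\ M_{31}&M_{32}&A&M_{34}\\ M_{41}&M_{42}&0&M_{44}\end{pmatrix}$$ with $A\in\mathrm{GL}(n-k,\mathbb{Z}_d)$ and the other blocks arbitrary (for $k=0$: $M=\begin{pmatrix}(A^T)^{-1}&0\\ M_{31}&A\end{pmatrix}$).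
   Context: $\mathbb{Z}_d$ is the ring of integers mod $d$; $\Lambda=\begin{pmatrix}0&I_n\\-I_n&0\end{pmatrix}$, $\mathrm{Sp}(2n,\mathbb{Z}_d)=\{M\in M_{2n}(\mathbb{Z}_d):M^T\Lambda M=\Lambda\}$. Vectors $a_1,\dots,a_m\in\mathbb{Z}_d^{N}$ are linearly independent if $\sum_i x_ia_i=0$ with $x_i\in\mathbb{Z}_d$ forces all $x_i=0$. Qudits: on $\mathbb{C}^d$ with orthonormal basis $\{|j\rangle\}_{j\in\mathbb{Z}_d}$ let $X|j\rangle=|j+1\rangle$, $Z|j\rangle=\omega^j|j\rangle$, $\omega=e^{2\pi i/d}$. The $n$-qudit Pauli group $\mathcal{P}_n$ is generated by the operators $X_j,Z_j$ (acting as $X$, resp. $Z$, on the $j$-th tensor factor of $(\mathbb{C}^d)^{\otimes n}$), together with $e^{\pi i/d}I$ when $d$ is even. Every element of $\mathcal{P}_n$ is a phase times $g(a)=X^{u_1}Z^{v_1}\otimes\cdots\otimes X^{u_n}Z^{v_n}$ for a unique $a=(u,v)\in\mathbb{Z}_d^{2n}$, and $g(a),g(b)$ commute iff $a^T\Lambda b=0$. An $[[n,k]]_d$ stabilizer group is $S=\langle g_1,\dots,g_{n-k}\rangle$ with $g_j\in\mathcal{P}_n$ pairwise commuting, each having $+1$ as an eigenvalue, and $|S|=d^{n-k}$; its code space is $\mathcal{C}(S)=\{\psi: g\psi=\psi\ \forall g\in S\}$, of dimension $d^k$. Writing $g_j$ as a phase times $g(a_j)$, the check matrix is the $2n\times(n-k)$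 matrix $H=[a_1|\cdots|a_{n-k}]$; its columns are linearly independent and satisfy $a_i^T\Lambda a_j=0$. Two stabilizer groups define the same $[[n,k]]_d$ stabilizer code iff their check matrices satisfy $H'=HA$ for some $A\in\mathrm{GL}(n-k,\mathbb{Z}_d)$ (in particular, stabilizer groups differing only by phases of the generators define the same code); equivalently, a code is determined by the subgroup of $\mathbb{Z}_d^{2n}$ spanned by the columns of its check matrix, i.e. by the span of $n-k$ linearly independent, pairwise symplectically orthogonal vectors of $\mathbb{Z}_d^{2n}$. *)

theory Defs
  imports Complex_Main "HOL-Number_Theory.Cong"
begin

text \<open>Elements of Z_d are represented by their canonical representatives in {0..<d}.  Arithmetic is done in int and compared modulo d.\<close>

definition vecs :: "int \<Rightarrow> nat \<Rightarrow> (nat \<Rightarrow> int) set" where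
  "vecs d N = {v. (\<forall>i<N. v i \<in> {0..<d}) \<and> (\<forall>i\<ge>N. v i = 0)}"

definition mats :: "int \<Rightarrow> nat \<Rightarrow> (nat \<Rightarrow> nat \<Rightarrow> int) set" where
  "mats d m = {M. \<forall>i j. (i < m \<and> j < m \<longrightarrow> M i j \<in> {0..<d})
                      \<and> (\<not> (i < m \<and> j < m) \<longrightarrow> M i j = 0)}"

definition mmul :: "nat \<Rightarrow> (nat \<Rightarrow> nat \<Rightarrow> int) \<Rightarrow> (nat \<Rightarrow> nat \<Rightarrow> int) \<Rightarrow> nat \<Rightarrow> nat \<Rightarrow> int" where
  "mmul m A B = (\<lambda>i j. \<Sum>l<m. A i l * B l j)"

definition mtrans :: "(nat \<Rightarrow> nat \<Rightarrow> int) \<Rightarrow> nat \<Rightarrow> nat \<Rightarrow> int" where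
  "mtrans A = (\<lambda>i j. A j i)"

definition mident :: "nat \<Rightarrow> nat \<Rightarrow> int" where
  "mident = (\<lambda>i j. if i = j then 1 else 0)"

definition meq_mod :: "int \<Rightarrow> nat \<Rightarrow> (nat \<Rightarrow> nat \<Rightarrow> int) \<Rightarrow> (nat \<Rightarrow> nat \<Rightarrow> int) \<Rightarrow> bool" where
  "meq_mod d m A B = (\<forall>i<m. \<forall>j<m. [A i j = B i j] (mod d))"

definition gl_mod :: "int \<Rightarrow> nat \<Rightarrow> (nat \<Rightarrow> nat \<Rightarrow> int) set" where
  "gl_mod d m = {A \<in> mats d m. \<exists>B \<in> mats d m.
      meq_mod d m (mmul m A B) mident \<and> meq_mod d m (mmul m B A) mident}"

definition Lambda :: "nat \<Rightarrow> nat \<Rightarrow> nat \<Rightarrow> int" where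
  "Lambda n = (\<lambda>i j. if i < n \<and> j = i + n then 1
                     else if j < n \<and> i = j + n then -1 else 0)"

definition Sp :: "int \<Rightarrow> nat \<Rightarrow> (nat \<Rightarrow> nat \<Rightarrow> int) set" where
  "Sp d n = {M \<in> mats d (2*n).
     meq_mod d (2*n) (mmul (2*n) (mtrans M) (mmul (2*n) (Lambda n) M)) (Lambda n)}"

definition symp :: "nat \<Rightarrow> (nat \<Rightarrow> int) \<Rightarrow> (nat \<Rightarrow> int) \<Rightarrow> int" where
  "symp n a b = (\<Sum>i<2*n. \<Sum>j<2*n. a i * Lambda n i j * b j)"

definition lin_indep_mod :: "int \<Rightarrow> nat \<Rightarrow> nat \<Rightarrow> (nat \<Rightarrow> nat \<Rightarrow> int) \<Rightarrow> bool" where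
  "lin_indep_mod d N m a =
     (\<forall>x :: nat \<Rightarrow> int. (\<forall>i<N. [(\<Sum>j<m. x j * a j i) = 0] (mod d))
         \<longrightarrow> (\<forall>j<m. [x j = 0] (mod d)))"

definition span_mod :: "int \<Rightarrow> nat \<Rightarrow> nat \<Rightarrow> (nat \<Rightarrow> nat \<Rightarrow> int) \<Rightarrow> (nat \<Rightarrow> int) set" where
  "span_mod d N m a = {v \<in> vecs d N. \<exists>x :: nat \<Rightarrow> int.
      \<forall>i<N. [v i = (\<Sum>j<m. x j * a j i)] (mod d)}"

text \<open>The set of [[n,k]]_d stabilizer codes, each identified with the subgroup of
  Z_d^{2n} spanned by the columns of its check matrix.\<close>
definition stab_codes :: "nat \<Rightarrow> nat \<Rightarrow> int \<Rightarrow> (nat \<Rightarrow> int) set set" where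
  "stab_codes n k d = {span_mod d (2*n) (n-k) a | a.
      (\<forall>j<n-k. a j \<in> vecs d (2*n)) \<and> lin_indep_mod d (2*n) (n-k) a \<and>
      (\<forall>i<n-k. \<forall>j<n-k. [symp n (a i) (a j) = 0] (mod d))}"

definition N_codes :: "nat \<Rightarrow> nat \<Rightarrow> int \<Rightarrow> nat" where
  "N_codes n k d = card (stab_codes n k d)"

text \<open>The set T(n,k,d). With r = n-k, blocks are [0,r), [r,n), [n,n+r), [n+r,2n).\<close>
definition T_set :: "nat \<Rightarrow> nat \<Rightarrow> int \<Rightarrow> (nat \<Rightarrow> nat \<Rightarrow> int) set" where
  "T_set n k d = {M \<in> Sp d n.
     (\<forall>i<n-k. \<forall>j. n-k \<le> j \<and> j < 2*n \<longrightarrow> M i j = 0) \<and>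
     (\<forall>i<2*n. \<forall>j. n \<le> j \<and> j < n + (n-k) \<and> \<not> (n \<le> i \<and> i < n + (n-k)) \<longrightarrow> M i j = 0) \<and>
     (\<exists>A \<in> gl_mod d (n-k).
        (\<forall>i<n-k. \<forall>j<n-k. M (n+i) (n+j) = A i j) \<and>
        meq_mod d (n-k) (mmul (n-k) (\<lambda>i j. M i j) (mtrans A)) mident \<and>
        meq_mod d (n-k) (mmul (n-k) (mtrans A) (\<lambda>i j. M i j)) mident)}"

end

theory Submission
  imports Defs
begin

(* With r = n - k, the map sending a symplectic matrix M to the span of its columns
   n, ..., n + r - 1 (the image under M of the standard code spanned by e_n, ..., e_(n+r-1))
   maps Sp(2n, Z_d) onto the set of [[n,k]]_d codes, because every independent isotropic
   family is the middle block of columns of some symplectic matrix. To see this one extends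
   the family one vector at a time -- over Z_d an independent family can always be enlarged:
   modulo a prime by counting, modulo a prime power by lifting, and for coprime moduli by the
   Chinese remainder theorem -- and finally completes a Lagrangian family to a symplectic basis
   with a symplectic dual family. The fibre over the code of M0 is M0 T, where T, the stabilizer
   of the standard code, is exactly T(n,k,d); hence |Sp| = N(n,k,d) |T|. *)

section \<open>Matrix arithmetic modulo \<open>d\<close>\<close>

definition unit_vec :: "nat \<Rightarrow> nat \<Rightarrow> int" where
  "unit_vec k = (\<lambda>i. if i = k then 1 else 0)"

lemma unit_vec_in_vecs: "d \<ge> 2 \<Longrightarrow> k < N \<Longrightarrow> unit_vec k \<in> vecs d N"
  unfolding unit_vec_def vecs_def by auto

lemma finite_vecs: "finite (vecs d N)"
proof -
  have "vecs d N \<subseteq> {f. \<forall>x. (x \<in> {..<N} \<longrightarrow> f x \<in> {0..<d}) \<and> (x \<notin> {..<N} \<longrightarrow> f x = 0)}"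
    unfolding vecs_def by auto
  moreover have "finite {f. \<forall>x. (x \<in> {..<N} \<longrightarrow> f x \<in> {0..<d}) \<and> (x \<notin> {..<N} \<longrightarrow> f x = (0::int))}"
    by (rule finite_set_of_finite_funs) auto
  ultimately show ?thesis by (rule finite_subset)
qed

lemma finite_mats: "finite (mats d m)"
proof -
  have "mats d m \<subseteq> {f. \<forall>x. (x \<in> {..<m} \<longrightarrow> f x \<in> vecs d m) \<and> (x \<notin> {..<m} \<longrightarrow> f x = (\<lambda>_. 0))}"
    unfolding vecs_def mats_def by auto
  moreover have "finite {f. \<forall>x. (x \<in> {..<m} \<longrightarrow> f x \<in> vecs d m) \<and> (x \<notin> {..<m} \<longrightarrow> f x = (\<lambda>_. (0::int)))}"
    by (rule finite_set_of_finite_funs) (auto simp: finite_vecs)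
  ultimately show ?thesis by (rule finite_subset)
qed

lemma vecs_mono:
  assumes "m \<le> N" "d > 0"
  shows "vecs d m \<subseteq> vecs d N"
proof
  fix x assume x: "x \<in> vecs d m"
  have "x i \<in> {0..<d}" if "i < N" for i
    using x assms by (cases "i < m") (auto simp: vecs_def)
  then show "x \<in> vecs d N" using x assms unfolding vecs_def by auto
qed

lemma sum_mult_mident_left: "k < m \<Longrightarrow> (\<Sum>l<m. f l * mident l k) = f k"
  unfolding mident_def by (simp add: if_distrib if_distribR cong: if_cong)

lemma sum_mult_mident_right: "i < m \<Longrightarrow> (\<Sum>l<m. f l * mident i l) = f i"
  unfolding mident_def by (simp add: if_distrib if_distribR cong: if_cong)

lemma mmul_mident_left: "i < m \<Longrightarrow> mmul m mident A i j = A i j"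
  unfolding mmul_def by (simp add: mult.commute sum_mult_mident_right)

lemma mmul_mident_right: "j < m \<Longrightarrow> mmul m A mident i j = A i j"
  unfolding mmul_def by (simp add: sum_mult_mident_left)

lemma mmul_assoc: "mmul m (mmul m A B) C = mmul m A (mmul m B C)"
  unfolding mmul_def
  by (auto simp: sum_distrib_left sum_distrib_right mult.assoc intro!: ext sum.swap[THEN trans])

lemma mtrans_mmul: "mtrans (mmul m A B) = mmul m (mtrans B) (mtrans A)"
  unfolding mtrans_def mmul_def by (simp add: mult.commute)

lemma mtrans_mident: "mtrans mident = mident"
  unfolding mtrans_def mident_def by (auto intro!: ext)

lemma meq_mod_refl [simp]: "meq_mod d m A A"
  unfolding meq_mod_def by auto

lemma meq_mod_sym: "meq_mod d m A B \<Longrightarrow> meq_mod d m B A"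
  unfolding meq_mod_def using cong_sym by blast

lemma meq_mod_trans [trans]: "meq_mod d m A B \<Longrightarrow> meq_mod d m B C \<Longrightarrow> meq_mod d m A C"
  unfolding meq_mod_def using cong_trans by blast

lemma meq_mod_mmul: "meq_mod d m A A' \<Longrightarrow> meq_mod d m B B' \<Longrightarrow> meq_mod d m (mmul m A B) (mmul m A' B')"
  unfolding meq_mod_def mmul_def by (auto intro!: cong_sum cong_mult)

lemma meq_mod_mtrans: "meq_mod d m A B \<Longrightarrow> meq_mod d m (mtrans A) (mtrans B)"
  unfolding meq_mod_def mtrans_def by auto

lemma meq_mod_mmul_mident_left [simp]: "meq_mod d m (mmul m mident A) A"
  unfolding meq_mod_def by (simp add: mmul_mident_left)

lemma meq_mod_mmul_mident_right [simp]: "meq_mod d m (mmul m A mident) A"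
  unfolding meq_mod_def by (simp add: mmul_mident_right)

lemma meq_mod_mmul_cancel_left:
  assumes "meq_mod d m (mmul m A B) mident"
  shows "meq_mod d m (mmul m A (mmul m B C)) C"
proof -
  have "meq_mod d m (mmul m (mmul m A B) C) (mmul m mident C)"
    using assms by (intro meq_mod_mmul) simp_all
  then show ?thesis by (simp add: mmul_assoc meq_mod_trans)
qed

lemma meq_mod_imp_eq:
  assumes "A \<in> mats d m" "B \<in> mats d m" "meq_mod d m A B"
  shows "A = B"
proof (intro ext)
  fix i j show "A i j = B i j"
  proof (cases "i < m \<and> j < m")
    case True then show ?thesis using assms unfolding mats_def meq_mod_def
      by (intro cong_less_imp_eq_int) auto
  next
    case False then show ?thesis using assms unfolding mats_def by auto
  qed
qed

lemma mats_cong_0_imp_eq_0: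
  assumes "M \<in> mats d m" "i < m" "j < m" "[M i j = 0] (mod d)"
  shows "M i j = 0"
proof -
  have "0 \<le> M i j" "M i j < d" using assms(1-3) unfolding mats_def by auto
  then show ?thesis using assms(4) by (intro cong_less_imp_eq_int) auto
qed

definition mat_mod :: "int \<Rightarrow> nat \<Rightarrow> (nat \<Rightarrow> nat \<Rightarrow> int) \<Rightarrow> nat \<Rightarrow> nat \<Rightarrow> int" where
  "mat_mod d m A = (\<lambda>i j. if i < m \<and> j < m then A i j mod d else 0)"

lemma mat_mod_in_mats: "d > 0 \<Longrightarrow> mat_mod d m A \<in> mats d m"
  unfolding mat_mod_def mats_def by auto

lemma meq_mod_mat_mod: "meq_mod d m (mat_mod d m A) A"
  unfolding mat_mod_def meq_mod_def by (simp add: cong_def)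

section \<open>Invertibility\<close>

definition mat_inj_mod :: "int \<Rightarrow> nat \<Rightarrow> (nat \<Rightarrow> nat \<Rightarrow> int) \<Rightarrow> bool" where
  "mat_inj_mod d m P =
     (\<forall>x. (\<forall>i<m. [(\<Sum>j<m. P i j * x j) = 0] (mod d)) \<longrightarrow> (\<forall>j<m. [x j = 0] (mod d)))"

lemma mat_inj_modD:
  "mat_inj_mod d m P \<Longrightarrow> (\<forall>i<m. [(\<Sum>j<m. P i j * x j) = 0] (mod d)) \<Longrightarrow> j < m \<Longrightarrow> [x j = 0] (mod d)"
  unfolding mat_inj_mod_def by blast

lemma left_inverse_imp_mat_inj_mod:
  assumes "meq_mod d m (mmul m L P) mident"
  shows "mat_inj_mod d m P"
  unfolding mat_inj_mod_def
proof (intro allI impI)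
  fix x j assume Px: "\<forall>i<m. [(\<Sum>l<m. P i l * x l) = 0] (mod d)" and j: "j < m"
  have "x j = (\<Sum>l<m. mident j l * x l)"
    using j by (simp add: mult.commute sum_mult_mident_right)
  also have "[\<dots> = (\<Sum>l<m. mmul m L P j l * x l)] (mod d)"
    using assms j unfolding meq_mod_def by (intro cong_sum cong_mult) (auto simp: cong_sym)
  also have "(\<Sum>l<m. mmul m L P j l * x l) = (\<Sum>i<m. L j i * (\<Sum>l<m. P i l * x l))"
    unfolding mmul_def sum_distrib_left sum_distrib_right mult.assoc by (rule sum.swap)
  also have "[\<dots> = (\<Sum>i<m. L j i * 0)] (mod d)"
    using Px by (intro cong_sum cong_mult) auto
  finally show "[x j = 0] (mod d)" by simp
qed

definition mat_vec_mod :: "int \<Rightarrow> nat \<Rightarrow> (nat \<Rightarrow> nat \<Rightarrow> int) \<Rightarrow> (nat \<Rightarrow> int) \<Rightarrow> nat \<Rightarrow> int" where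
  "mat_vec_mod d m P x = (\<lambda>i. if i < m then (\<Sum>j<m. P i j * x j) mod d else 0)"

lemma mat_vec_mod_in_vecs: "d > 0 \<Longrightarrow> mat_vec_mod d m P x \<in> vecs d m"
  unfolding mat_vec_mod_def vecs_def by auto

lemma inj_on_mat_vec_mod:
  assumes inj: "mat_inj_mod d m P"
  shows "inj_on (mat_vec_mod d m P) (vecs d m)"
proof (rule inj_onI)
  fix x y assume x: "x \<in> vecs d m" and y: "y \<in> vecs d m" and xy: "mat_vec_mod d m P x = mat_vec_mod d m P y"
  have "\<forall>i<m. [(\<Sum>j<m. P i j * (x j - y j)) = 0] (mod d)"
  proof (intro allI impI)
    fix i assume "i < m"
    then have "[(\<Sum>j<m. P i j * x j) = (\<Sum>j<m. P i j * y j)] (mod d)"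
      using fun_cong[OF xy, of i] unfolding mat_vec_mod_def cong_def by simp
    then show "[(\<Sum>j<m. P i j * (x j - y j)) = 0] (mod d)"
      by (simp add: right_diff_distrib sum_subtractf cong_iff_dvd_diff)
  qed
  then have "[x j = y j] (mod d)" if "j < m" for j
    using mat_inj_modD[OF inj _ that] by (simp add: cong_iff_dvd_diff)
  then show "x = y"
  proof (intro ext)
    fix j show "x j = y j"
      using x y \<open>j < m \<Longrightarrow> [x j = y j] (mod d)\<close> unfolding vecs_def
      by (cases "j < m") (auto intro: cong_less_imp_eq_int)
  qed
qed

text \<open>An injective endomorphism of the finite set \<open>vecs d m\<close> is onto; preimages of the unit
  vectors form the columns of a right inverse.\<close>

lemma mat_inj_mod_imp_right_inverse:
  assumes d: "d \<ge> 2" and inj: "mat_inj_mod d m P"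
  shows "\<exists>U. meq_mod d m (mmul m P U) mident"
proof -
  have "mat_vec_mod d m P ` vecs d m = vecs d m"
    using endo_inj_surj[OF finite_vecs _ inj_on_mat_vec_mod[OF inj]] d mat_vec_mod_in_vecs by force
  then have "\<forall>k. \<exists>u. k < m \<longrightarrow> mat_vec_mod d m P u = unit_vec k"
    using unit_vec_in_vecs[OF d] by (metis image_iff)
  then obtain u where u: "\<And>k. k < m \<Longrightarrow> mat_vec_mod d m P (u k) = unit_vec k"
    by metis
  have "[mmul m P (\<lambda>j k. u k j) i k = mident i k] (mod d)" if i: "i < m" and k: "k < m" for i k
  proof -
    have "(\<Sum>j<m. P i j * u k j) mod d = unit_vec k i"
      using fun_cong[OF u[OF k], of i] i unfolding mat_vec_mod_def by simp
    then show ?thesis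
      using d unfolding mmul_def cong_def unit_vec_def mident_def by auto
  qed
  then show ?thesis unfolding meq_mod_def by blast
qed

lemma right_inverse_imp_left_inverse:
  assumes d: "d \<ge> 2" and AB: "meq_mod d m (mmul m A B) mident"
  shows "meq_mod d m (mmul m B A) mident"
proof -
  obtain V where BV: "meq_mod d m (mmul m B V) mident"
    using mat_inj_mod_imp_right_inverse[OF d left_inverse_imp_mat_inj_mod[OF AB]] by blast
  have "meq_mod d m A (mmul m A (mmul m B V))"
    using meq_mod_mmul[OF meq_mod_refl BV, of A] meq_mod_mmul_mident_right[of d m A]
    by (blast intro: meq_mod_sym meq_mod_trans)
  also have "meq_mod d m (mmul m A (mmul m B V)) V"
    by (rule meq_mod_mmul_cancel_left[OF AB])
  finally have "meq_mod d m (mmul m B A) (mmul m B V)"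
    by (intro meq_mod_mmul) simp_all
  then show ?thesis using BV by (rule meq_mod_trans)
qed

lemma mat_inj_mod_imp_inverse:
  assumes "d \<ge> 2" "mat_inj_mod d m P"
  shows "\<exists>U. meq_mod d m (mmul m P U) mident \<and> meq_mod d m (mmul m U P) mident"
  using mat_inj_mod_imp_right_inverse[OF assms] right_inverse_imp_left_inverse[OF assms(1)] by blast

section \<open>Extending independent families\<close>

lemma lin_indep_modD:
  "lin_indep_mod d N m a \<Longrightarrow> (\<forall>i<N. [(\<Sum>j<m. x j * a j i) = 0] (mod d)) \<Longrightarrow> j < m \<Longrightarrow> [x j = 0] (mod d)"
  unfolding lin_indep_mod_def by blast

lemma lin_indep_mod_one: "lin_indep_mod 1 N m a"
  unfolding lin_indep_mod_def by simp

lemma lin_indep_mod_cong: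
  assumes ind: "lin_indep_mod d N m a" and cong: "\<forall>j<m. \<forall>i<N. [b j i = a j i] (mod d)"
  shows "lin_indep_mod d N m b"
  unfolding lin_indep_mod_def
proof (intro allI impI)
  fix x j assume h: "\<forall>i<N. [(\<Sum>j<m. x j * b j i) = 0] (mod d)" and j: "j < m"
  have "\<forall>i<N. [(\<Sum>j<m. x j * a j i) = 0] (mod d)"
  proof (intro allI impI)
    fix i assume i: "i < N"
    have "[(\<Sum>j<m. x j * a j i) = (\<Sum>j<m. x j * b j i)] (mod d)"
      using cong i by (intro cong_sum cong_mult) (auto simp: cong_sym)
    then show "[(\<Sum>j<m. x j * a j i) = 0] (mod d)" using h i cong_trans by blast
  qed
  then show "[x j = 0] (mod d)" using lin_indep_modD[OF ind] j by blast
qed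

lemma lin_indep_mod_factor:
  assumes ind: "lin_indep_mod (d1 * d2) N m a" and d2: "d2 \<noteq> 0"
  shows "lin_indep_mod d1 N m a"
  unfolding lin_indep_mod_def
proof (intro allI impI)
  fix x j assume h: "\<forall>i<N. [(\<Sum>j<m. x j * a j i) = 0] (mod d1)" and j: "j < m"
  have "\<forall>i<N. [(\<Sum>j<m. (d2 * x j) * a j i) = 0] (mod d1 * d2)"
    using h by (simp add: cong_0_iff sum_distrib_left[symmetric] mult.assoc mult.commute[of d1])
  from lin_indep_modD[OF ind this j] have "d1 * d2 dvd d2 * x j" by (simp add: cong_0_iff)
  then show "[x j = 0] (mod d1)" using d2 by (simp add: cong_0_iff mult.commute)
qed

lemma lin_indep_mod_coprime_mult:
  assumes "lin_indep_mod d1 N m a" "lin_indep_mod d2 N m a" "coprime d1 d2"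
  shows "lin_indep_mod (d1 * d2) N m a"
  unfolding lin_indep_mod_def
proof (intro allI impI)
  fix x j assume h: "\<forall>i<N. [(\<Sum>j<m. x j * a j i) = 0] (mod d1 * d2)" and j: "j < m"
  have "[x j = 0] (mod d1)"
    using h cong_modulus_mult lin_indep_modD[OF assms(1) _ j] by blast
  moreover have "[x j = 0] (mod d2)"
    using h cong_modulus_mult[of _ _ d2 d1] lin_indep_modD[OF assms(2) _ j] by (simp add: mult.commute)
  ultimately show "[x j = 0] (mod d1 * d2)" using assms(3) by (rule coprime_cong_mult)
qed

lemma lin_indep_mod_power:
  fixes p :: int
  assumes ind: "lin_indep_mod p N m a" and p: "p \<noteq> 0"
  shows "lin_indep_mod (p ^ e) N m a"
proof -
  have "\<forall>x. (\<forall>i<N. p ^ e dvd (\<Sum>j<m. x j * a j i)) \<longrightarrow> (\<forall>j<m. p ^ e dvd x j)"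
  proof (induction e)
    case (Suc e)
    show ?case
    proof (intro allI impI)
      fix x j assume h: "\<forall>i<N. p ^ Suc e dvd (\<Sum>j<m. x j * a j i)" and j: "j < m"
      then have "\<forall>j<m. p ^ e dvd x j"
        using Suc.IH by (metis dvd_mult_left power_Suc2)
      define y where "y j = x j div p ^ e" for j
      have xy: "\<forall>j<m. x j = p ^ e * y j"
        using \<open>\<forall>j<m. p ^ e dvd x j\<close> unfolding y_def by simp
      have "p dvd (\<Sum>j<m. y j * a j i)" if "i < N" for i
      proof -
        have "p ^ e * p dvd p ^ e * (\<Sum>j<m. y j * a j i)"
          using h that xy by (simp add: sum_distrib_left mult.assoc mult.commute[of p])
        then show ?thesis using p by simp
      qed
      then have "p dvd y j" using lin_indep_modD[OF ind _ j] by (simp add: cong_0_iff)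
      then show "p ^ Suc e dvd x j" using xy j by (simp add: power_Suc2)
    qed
  qed simp
  then show ?thesis unfolding lin_indep_mod_def by (simp add: cong_0_iff)
qed

lemma card_vecs_strict_mono:
  assumes "d \<ge> 2" and "m < N"
  shows "card (vecs d m) < card (vecs d N)"
proof (rule psubset_card_mono[OF finite_vecs], rule psubsetI)
  show "vecs d m \<subseteq> vecs d N" using assms by (intro vecs_mono) auto
  have "unit_vec m \<in> vecs d N" using unit_vec_in_vecs assms by simp
  moreover have "unit_vec m \<notin> vecs d m" unfolding vecs_def unit_vec_def by auto
  ultimately show "vecs d m \<noteq> vecs d N" by blast
qed

lemma unit_vecs_in_span_imp_le:
  fixes d :: int
  assumes d: "d \<ge> 2"
    and span: "\<And>i t. i < N \<Longrightarrow> t < N \<Longrightarrow> [unit_vec i t = (\<Sum>j<m. C i j * a j t)] (mod d)"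
  shows "N \<le> m"
proof (rule ccontr)
  assume "\<not> N \<le> m"
  define F where "F x = (\<lambda>t. if t < N then (\<Sum>j<m. x j * a j t) mod d else 0)" for x
  have "vecs d N \<subseteq> F ` vecs d m"
  proof
    fix v assume v: "v \<in> vecs d N"
    define x where "x j = (if j < m then (\<Sum>i<N. v i * C i j) mod d else 0)" for j
    have "F x t = v t" for t
    proof (cases "t < N")
      case t: True
      have "v t = (\<Sum>i<N. v i * unit_vec i t)"
        using t by (simp add: unit_vec_def if_distrib cong: if_cong)
      also have "[\<dots> = (\<Sum>i<N. v i * (\<Sum>j<m. C i j * a j t))] (mod d)"
        using span t by (intro cong_sum cong_mult) auto
      also have "(\<Sum>i<N. v i * (\<Sum>j<m. C i j * a j t)) = (\<Sum>j<m. (\<Sum>i<N. v i * C i j) * a j t)"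
        unfolding sum_distrib_left sum_distrib_right mult.assoc by (rule sum.swap)
      also have "[\<dots> = (\<Sum>j<m. x j * a j t)] (mod d)"
        unfolding x_def by (intro cong_sum cong_mult) (auto simp: cong_def)
      finally show ?thesis
        using v t unfolding F_def vecs_def cong_def by simp
    qed (use v in \<open>simp add: F_def vecs_def\<close>)
    moreover have "x \<in> vecs d m" using d unfolding x_def vecs_def by auto
    ultimately show "v \<in> F ` vecs d m" by (auto intro!: image_eqI[of v F x])
  qed
  then have "card (vecs d N) \<le> card (F ` vecs d m)"
    by (intro card_mono finite_imageI finite_vecs)
  also have "\<dots> \<le> card (vecs d m)" by (rule card_image_le[OF finite_vecs])
  finally have "card (vecs d N) \<le> card (vecs d m)" .
  moreover have "card (vecs d m) < card (vecs d N)"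
    using d \<open>\<not> N \<le> m\<close> by (intro card_vecs_strict_mono) auto
  ultimately show False by simp
qed

lemma combination_if_not_lin_indep_mod_prime:
  fixes p :: int
  assumes p: "prime p" and ind: "lin_indep_mod p N m a"
    and dep: "\<not> lin_indep_mod p N (Suc m) (a(m := w))"
  shows "\<exists>c. \<forall>t<N. [w t = (\<Sum>j<m. c j * a j t)] (mod p)"
proof -
  obtain x j0 where x0: "\<forall>t<N. [(\<Sum>j<Suc m. x j * (a(m := w)) j t) = 0] (mod p)"
    and j0: "j0 < Suc m" "\<not> [x j0 = 0] (mod p)"
    using dep unfolding lin_indep_mod_def by blast
  have x: "[(\<Sum>j<m. x j * a j t) + x m * w t = 0] (mod p)" if "t < N" for t
    using x0 that by simp
  have "\<not> p dvd x m"
  proof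
    assume xm: "p dvd x m"
    have "[(\<Sum>j<m. x j * a j t) = 0] (mod p)" if "t < N" for t
    proof -
      have "p dvd (\<Sum>j<m. x j * a j t) + x m * w t"
        using x[OF that] by (simp add: cong_0_iff)
      moreover have "p dvd x m * w t" using xm by simp
      ultimately show ?thesis by (simp add: cong_0_iff dvd_add_left_iff)
    qed
    then have "[x j = 0] (mod p)" if "j < m" for j
      using lin_indep_modD[OF ind _ that] by blast
    moreover have "[x m = 0] (mod p)" using xm by (simp add: cong_0_iff)
    ultimately show False using j0 less_Suc_eq by blast
  qed
  then obtain y where y: "[x m * y = 1] (mod p)"
    using p cong_solve_coprime_int coprime_commute prime_imp_coprime by blast
  have "[w t = (\<Sum>j<m. (- (y * x j)) * a j t)] (mod p)" if t: "t < N" for t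
  proof -
    define S where "S = (\<Sum>j<m. x j * a j t)"
    have "[w t = (x m * y) * w t] (mod p)"
      using cong_scalar_right[OF y, of "w t"] by (simp add: cong_sym)
    also have "(x m * y) * w t = y * (S + x m * w t) - y * S"
      by (simp add: algebra_simps)
    also have "[y * (S + x m * w t) - y * S = y * 0 - y * S] (mod p)"
      using x[OF t] unfolding S_def by (intro cong_diff cong_mult) auto
    also have "y * 0 - y * S = (\<Sum>j<m. (- (y * x j)) * a j t)"
      unfolding S_def by (simp add: sum_distrib_left sum_negf mult.assoc)
    finally show ?thesis .
  qed
  then show ?thesis by (intro exI[of _ "\<lambda>j. - (y * x j)"]) blast
qed

lemma lin_indep_mod_prime_extend:
  fixes p :: int
  assumes p: "prime p" and ind: "lin_indep_mod p N m a" and m: "m < N"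
  shows "\<exists>i<N. lin_indep_mod p N (Suc m) (a(m := unit_vec i))"
proof (rule ccontr)
  assume "\<not> ?thesis"
  then have "\<forall>i. \<exists>c. i < N \<longrightarrow> (\<forall>t<N. [unit_vec i t = (\<Sum>j<m. c j * a j t)] (mod p))"
    using combination_if_not_lin_indep_mod_prime[OF p ind] by blast
  then obtain C where "\<And>i t. i < N \<Longrightarrow> t < N \<Longrightarrow> [unit_vec i t = (\<Sum>j<m. C i j * a j t)] (mod p)"
    by metis
  then have "N \<le> m"
    using p by (intro unit_vecs_in_span_imp_le[where d = p]) (auto simp: prime_ge_2_int)
  then show False using m by simp
qed

lemma lin_indep_mod_prime_power_extend:
  fixes p :: int
  assumes p: "prime p" and ind: "lin_indep_mod (p ^ Suc e) N m a" and m: "m < N"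
  shows "\<exists>w. lin_indep_mod (p ^ Suc e) N (Suc m) (a(m := w))"
proof -
  have p0: "p \<noteq> 0" using p by auto
  have "lin_indep_mod p N m a"
    using lin_indep_mod_factor[of p "p ^ e"] ind p0 by simp
  then obtain i where "lin_indep_mod p N (Suc m) (a(m := unit_vec i))"
    using lin_indep_mod_prime_extend[OF p _ m] by blast
  then show ?thesis using lin_indep_mod_power p0 by blast
qed

lemma lin_indep_mod_coprime_mult_extend:
  assumes cop: "coprime d1 d2" and "d1 > 0" "d2 > 0"
    and ext1: "lin_indep_mod d1 N m a \<Longrightarrow> \<exists>w. lin_indep_mod d1 N (Suc m) (a(m := w))"
    and ext2: "lin_indep_mod d2 N m a \<Longrightarrow> \<exists>w. lin_indep_mod d2 N (Suc m) (a(m := w))"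
    and ind: "lin_indep_mod (d1 * d2) N m a"
  shows "\<exists>w. lin_indep_mod (d1 * d2) N (Suc m) (a(m := w))"
proof -
  have "lin_indep_mod d1 N m a" using lin_indep_mod_factor[OF ind] \<open>d2 > 0\<close> by simp
  then obtain w1 where w1: "lin_indep_mod d1 N (Suc m) (a(m := w1))" using ext1 by blast
  have "lin_indep_mod d2 N m a"
    using lin_indep_mod_factor[of d2 d1] ind \<open>d1 > 0\<close> by (simp add: mult.commute)
  then obtain w2 where w2: "lin_indep_mod d2 N (Suc m) (a(m := w2))" using ext2 by blast
  have "\<forall>i. \<exists>z. [z = w1 i] (mod d1) \<and> [z = w2 i] (mod d2)"
    using binary_chinese_remainder_int[OF cop] by blast
  then obtain w where w: "\<And>i. [w i = w1 i] (mod d1) \<and> [w i = w2 i] (mod d2)"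
    by (metis choice)
  have "lin_indep_mod d1 N (Suc m) (a(m := w))"
    by (rule lin_indep_mod_cong[OF w1]) (use w in auto)
  moreover have "lin_indep_mod d2 N (Suc m) (a(m := w))"
    by (rule lin_indep_mod_cong[OF w2]) (use w in auto)
  ultimately show ?thesis using cop lin_indep_mod_coprime_mult by blast
qed

lemma prime_power_coprime_factor:
  fixes d :: int
  assumes "d > 1"
  obtains p e y where "prime p" "d = p ^ Suc e * y" "coprime (p ^ Suc e) y" "y > 0"
proof -
  obtain p where p: "prime p" "p dvd d"
    using assms prime_divisor_exists[of d] by auto
  have "d \<noteq> 0" "\<not> is_unit p" using assms p(1) not_prime_unit by auto
  then obtain y where dy: "d = p ^ multiplicity p d * y" and "\<not> p dvd y"
    by (rule multiplicity_decompose')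
  have "multiplicity p d > 0"
    using prime_multiplicity_gt_zero_iff[OF prime_imp_prime_elem[OF p(1)] \<open>d \<noteq> 0\<close>] p(2) by simp
  then obtain e where "multiplicity p d = Suc e" using gr0_implies_Suc by blast
  moreover have "y > 0"
    using zero_less_mult_pos[of "p ^ multiplicity p d" y] dy assms prime_gt_0_int[OF p(1)] by simp
  moreover have "coprime (p ^ Suc e) y"
    using p(1) \<open>\<not> p dvd y\<close> by (simp add: prime_imp_coprime)
  ultimately show ?thesis using that p(1) dy by simp
qed

text \<open>Strong induction on \<open>d\<close>: split off the full power of a prime divisor and recombine
  the two extensions by the Chinese remainder theorem.\<close>

lemma lin_indep_mod_extend:
  fixes d :: int
  assumes "d \<ge> 1" and "lin_indep_mod d N m a" and m: "m < N"
  shows "\<exists>w. lin_indep_mod d N (Suc m) (a(m := w))"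
  using assms(1,2)
proof (induction "nat d" arbitrary: d a rule: less_induct)
  case less
  show ?case
  proof (cases "d = 1")
    case True then show ?thesis using lin_indep_mod_one by blast
  next
    case False
    with less.prems(1) have "d > 1" by simp
    then obtain p e y where p: "prime p" and dy: "d = p ^ Suc e * y"
      and cop: "coprime (p ^ Suc e) y" and "y > 0"
      by (rule prime_power_coprime_factor)
    have q: "p ^ Suc e > 1" using prime_gt_1_int[OF p] by (intro one_less_power) simp_all
    show ?thesis
    proof (cases "y = 1")
      case True
      then show ?thesis using lin_indep_mod_prime_power_extend[OF p _ m] less.prems(2) dy by simp
    next
      case False
      with \<open>y > 0\<close> have "y > 1" by simp
      have "p ^ Suc e * 1 < p ^ Suc e * y" "1 * y < p ^ Suc e * y"
        using q \<open>y > 1\<close> by (simp_all only: mult_strict_left_mono mult_strict_right_mono)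
      then have "nat (p ^ Suc e) < nat d" "nat y < nat d"
        using dy q \<open>y > 1\<close> by simp_all
      with q \<open>y > 1\<close> show ?thesis
        using lin_indep_mod_coprime_mult_extend[OF cop _ _ less.hyps less.hyps] less.prems(2) dy by simp
    qed
  qed
qed

lemma lin_indep_mod_extend_basis:
  fixes d :: int
  assumes d: "d \<ge> 1" and "m \<le> N" and "lin_indep_mod d N m a"
  shows "\<exists>c. lin_indep_mod d N N c \<and> (\<forall>j<m. c j = a j)"
  using assms(2,3)
proof (induction m arbitrary: a rule: inc_induct)
  case (step m)
  then obtain w where "lin_indep_mod d N (Suc m) (a(m := w))"
    using lin_indep_mod_extend[OF d] by blast
  then obtain c where "lin_indep_mod d N N c" "\<forall>j<Suc m. c j = (a(m := w)) j"
    using step.IH by blast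
  then show ?case by (intro exI[of _ c]) auto
qed blast

lemma lin_indep_mod_dual:
  fixes d :: int
  assumes d: "d \<ge> 2" and "m \<le> N" and "lin_indep_mod d N m a"
  shows "\<exists>U. \<forall>k<m. \<forall>j<m. [(\<Sum>t<N. U k t * a j t) = mident k j] (mod d)"
proof -
  have "d \<ge> 1" using d by simp
  then obtain c where c: "lin_indep_mod d N N c" "\<forall>j<m. c j = a j"
    using lin_indep_mod_extend_basis assms(2,3) by blast
  then have "mat_inj_mod d N (\<lambda>t j. c j t)"
    unfolding lin_indep_mod_def mat_inj_mod_def by (simp add: mult.commute)
  then obtain U where U: "meq_mod d N (mmul N U (\<lambda>t j. c j t)) mident"
    using mat_inj_mod_imp_inverse[OF d] by blast
  have "[(\<Sum>t<N. U k t * a j t) = mident k j] (mod d)" if "k < m" "j < m" for k j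
  proof -
    have "k < N" "j < N" using that \<open>m \<le> N\<close> by auto
    then have "[(\<Sum>t<N. U k t * c j t) = mident k j] (mod d)"
      using U unfolding meq_mod_def mmul_def by blast
    then show ?thesis using c(2) that(2) by simp
  qed
  then show ?thesis by blast
qed

section \<open>The symplectic form\<close>

lemma sum_lessThan_add: "(\<Sum>j<m + (l::nat). f j) = (\<Sum>j<m. f j) + (\<Sum>j<l. f (m + j))"
  by (induction l) (auto simp: add.assoc)

definition Lambda_vec :: "nat \<Rightarrow> (nat \<Rightarrow> int) \<Rightarrow> nat \<Rightarrow> int" where
  "Lambda_vec n v = (\<lambda>i. if i < n then v (i + n) else - v (i - n))"

lemma sum_Lambda_mult:
  assumes "i < 2 * n"
  shows "(\<Sum>l<2 * n. Lambda n i l * v l) = Lambda_vec n v i"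
proof -
  let ?i' = "if i < n then i + n else i - n"
  have "(\<Sum>l<2 * n. Lambda n i l * v l) = (\<Sum>l<2 * n. if l = ?i' then Lambda_vec n v i else 0)"
    using assms by (intro sum.cong) (auto simp: Lambda_def Lambda_vec_def)
  also have "\<dots> = Lambda_vec n v i"
    using assms by (simp add: sum.delta' less_imp_diff_less)
  finally show ?thesis .
qed

lemma symp_eq_sum_Lambda_vec: "symp n u v = (\<Sum>i<2 * n. u i * Lambda_vec n v i)"
  unfolding symp_def by (simp add: mult.assoc sum_distrib_left[symmetric] sum_Lambda_mult)

lemma symp_eq: "symp n u v = (\<Sum>i<n. u i * v (i + n) - u (i + n) * v i)"
  unfolding symp_eq_sum_Lambda_vec mult_2 sum_lessThan_add
  by (simp add: Lambda_vec_def sum_subtractf sum_negf add.commute)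

lemma symp_antisym: "symp n u v = - symp n v u"
  unfolding symp_eq by (simp add: sum_negf[symmetric] algebra_simps)

lemma symp_self [simp]: "symp n u u = 0"
  using symp_antisym[of n u u] by simp

lemma symp_sum_left: "symp n (\<lambda>t. \<Sum>j<m. x j * a j t) v = (\<Sum>j<m. x j * symp n (a j) v)"
  unfolding symp_eq_sum_Lambda_vec sum_distrib_right sum_distrib_left mult.assoc
  by (rule sum.swap)

lemma symp_sum_right: "symp n v (\<lambda>t. \<Sum>j<m. x j * a j t) = (\<Sum>j<m. x j * symp n v (a j))"
proof -
  have "symp n v (\<lambda>t. \<Sum>j<m. x j * a j t) = - (\<Sum>j<m. x j * symp n (a j) v)"
    by (subst symp_antisym) (simp add: symp_sum_left)
  then show ?thesis using symp_antisym[of n v] by (simp add: sum_negf[symmetric])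
qed

lemma symp_add_left: "symp n (\<lambda>t. u t + w t) v = symp n u v + symp n w v"
  unfolding symp_def by (simp add: algebra_simps sum.distrib)

lemma symp_add_right: "symp n v (\<lambda>t. u t + w t) = symp n v u + symp n v w"
  unfolding symp_def by (simp add: algebra_simps sum.distrib)

lemma symp_diff_left: "symp n (\<lambda>t. u t - w t) v = symp n u v - symp n w v"
  unfolding symp_def by (simp add: algebra_simps sum_subtractf)

lemma symp_cong:
  assumes "\<forall>i<2 * n. [u i = u' i] (mod d)" "\<forall>i<2 * n. [v i = v' i] (mod d)"
  shows "[symp n u v = symp n u' v'] (mod d)"
  unfolding symp_def using assms by (intro cong_sum cong_mult) auto

lemma symp_cong_antisym:
  assumes "[symp n u v = c] (mod d)"
  shows "[symp n v u = - c] (mod d)"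
proof -
  have "[- symp n u v = - c] (mod d)" using assms by (simp add: cong_minus_minus_iff)
  then show ?thesis by (simp add: symp_antisym[of n v u])
qed

lemma lin_indep_mod_Lambda_vec:
  assumes ind: "lin_indep_mod d (2 * n) m a"
  shows "lin_indep_mod d (2 * n) m (\<lambda>j. Lambda_vec n (a j))"
  unfolding lin_indep_mod_def
proof (intro allI impI)
  fix x j assume h: "\<forall>t<2 * n. [(\<Sum>j<m. x j * Lambda_vec n (a j) t) = 0] (mod d)" and j: "j < m"
  have "[(\<Sum>j<m. x j * a j s) = 0] (mod d)" if s: "s < 2 * n" for s
  proof (cases "s < n")
    case True
    have "[(\<Sum>j<m. x j * Lambda_vec n (a j) (s + n)) = 0] (mod d)" using h True by simp
    then show ?thesis using True by (simp add: Lambda_vec_def sum_negf cong_0_iff)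
  next
    case False
    with s have "s - n < n" "s - n + n = s" by simp_all
    moreover have "[(\<Sum>j<m. x j * Lambda_vec n (a j) (s - n)) = 0] (mod d)" using h s by simp
    ultimately show ?thesis by (simp add: Lambda_vec_def)
  qed
  then show "[x j = 0] (mod d)" using lin_indep_modD[OF ind _ j] by blast
qed

lemma symp_dual:
  fixes d :: int
  assumes "d \<ge> 2" and "lin_indep_mod d (2 * n) m a" and "m \<le> 2 * n"
  shows "\<exists>b. \<forall>k<m. \<forall>j<m. [symp n (b k) (a j) = mident k j] (mod d)"
proof -
  obtain U where "\<forall>k<m. \<forall>j<m. [(\<Sum>t<2 * n. U k t * Lambda_vec n (a j) t) = mident k j] (mod d)"
    using lin_indep_mod_dual[OF assms(1,3) lin_indep_mod_Lambda_vec[OF assms(2)]] by blast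
  then show ?thesis unfolding symp_eq_sum_Lambda_vec by (intro exI[of _ U])
qed

section \<open>Symplectic completion of isotropic families\<close>

definition symplectic_mod :: "int \<Rightarrow> nat \<Rightarrow> (nat \<Rightarrow> nat \<Rightarrow> int) \<Rightarrow> bool" where
  "symplectic_mod d n M \<longleftrightarrow>
     meq_mod d (2 * n) (mmul (2 * n) (mtrans M) (mmul (2 * n) (Lambda n) M)) (Lambda n)"

lemma Sp_iff: "M \<in> Sp d n \<longleftrightarrow> M \<in> mats d (2 * n) \<and> symplectic_mod d n M"
  unfolding Sp_def symplectic_mod_def by simp

lemma mmul_mtrans_Lambda_eq_symp:
  "mmul (2 * n) (mtrans M) (mmul (2 * n) (Lambda n) M) j l = symp n (\<lambda>i. M i j) (\<lambda>i. M i l)"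
  unfolding mmul_def mtrans_def symp_def by (simp add: sum_distrib_left mult.assoc)

lemma symplectic_mod_iff_symp:
  "symplectic_mod d n M \<longleftrightarrow>
     (\<forall>j<2 * n. \<forall>l<2 * n. [symp n (\<lambda>i. M i j) (\<lambda>i. M i l) = Lambda n j l] (mod d))"
  unfolding symplectic_mod_def meq_mod_def mmul_mtrans_Lambda_eq_symp ..

text \<open>Correcting \<open>b i\<close> by multiples of the \<open>a l\<close> with \<open>l < i\<close> kills the pairings
  \<open>symp (b i) (b k)\<close> for \<open>k < i\<close>, and antisymmetry takes care of \<open>k > i\<close>.\<close>

lemma isotropic_symp_dual:
  assumes iso: "\<forall>i<r. \<forall>j<r. [symp n (a i) (a j) = 0] (mod d)"
    and dual: "\<forall>k<r. \<forall>j<r. [symp n (b k) (a j) = mident k j] (mod d)"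
  shows "\<exists>b'. (\<forall>k<r. \<forall>j<r. [symp n (b' k) (a j) = mident k j] (mod d)) \<and>
              (\<forall>i<r. \<forall>k<r. [symp n (b' i) (b' k) = 0] (mod d))"
proof -
  define t where "t i l = (if l < i then symp n (b i) (b l) else 0)" for i l
  define b' where "b' i = (\<lambda>s. b i s + (\<Sum>l<r. t i l * a l s))" for i
  have b'a: "[symp n (b' i) (a j) = mident i j] (mod d)" if "i < r" "j < r" for i j
  proof -
    have "[symp n (b' i) (a j) = mident i j + (\<Sum>l<r. t i l * 0)] (mod d)"
      unfolding b'_def symp_add_left symp_sum_left
      using dual iso that by (intro cong_add cong_sum cong_mult) auto
    then show ?thesis by simp
  qed
  have b'b': "[symp n (b' i) (b' k) = 0] (mod d)" if i: "i < r" and k: "k < r" for i k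
  proof -
    have "symp n (b i) (b' k) = symp n (b i) (b k) + (\<Sum>l<r. t k l * symp n (b i) (a l))"
      unfolding b'_def[of k] symp_add_right symp_sum_right ..
    then have expand: "symp n (b' i) (b' k) = symp n (b i) (b k) + (\<Sum>l<r. t k l * symp n (b i) (a l))
        + (\<Sum>l<r. t i l * symp n (a l) (b' k))"
      unfolding b'_def[of i] symp_add_left symp_sum_left by simp
    have "[symp n (b i) (b k) + (\<Sum>l<r. t k l * symp n (b i) (a l)) + (\<Sum>l<r. t i l * symp n (a l) (b' k))
        = symp n (b i) (b k) + (\<Sum>l<r. t k l * mident i l) + (\<Sum>l<r. t i l * - mident k l)] (mod d)"
      using dual b'a[OF k] i by (intro cong_add cong_sum cong_mult) (auto intro: symp_cong_antisym)
    moreover have "symp n (b i) (b k) + (\<Sum>l<r. t k l * mident i l) + (\<Sum>l<r. t i l * - mident k l)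
        = symp n (b i) (b k) + t k i - t i k"
      unfolding mult_minus_right sum_negf sum_mult_mident_right[OF i] sum_mult_mident_right[OF k]
      by simp
    moreover have "symp n (b i) (b k) + t k i - t i k = 0"
      unfolding t_def using symp_antisym[of n "b i" "b k"] by (cases i k rule: linorder_cases) auto
    ultimately show ?thesis unfolding expand by simp
  qed
  show ?thesis using b'a b'b' by blast
qed

lemma symplectic_mod_of_columns:
  assumes iso_a: "\<forall>i<n. \<forall>j<n. [symp n (a i) (a j) = 0] (mod d)"
    and iso_b: "\<forall>i<n. \<forall>k<n. [symp n (b i) (b k) = 0] (mod d)"
    and dual: "\<forall>k<n. \<forall>j<n. [symp n (b k) (a j) = mident k j] (mod d)"
  shows "symplectic_mod d n (\<lambda>i j. if j < n then b j i else a (j - n) i)"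
  unfolding symplectic_mod_iff_symp
proof (intro allI impI)
  fix j l assume j: "j < 2 * n" and l: "l < 2 * n"
  show "[symp n (\<lambda>i. if j < n then b j i else a (j - n) i) (\<lambda>i. if l < n then b l i else a (l - n) i)
      = Lambda n j l] (mod d)"
  proof (cases "j < n"; cases "l < n")
    assume "j < n" "l < n"
    then show ?thesis using iso_b by (simp add: Lambda_def)
  next
    assume "j < n" "\<not> l < n"
    moreover have "Lambda n j l = mident j (l - n)"
      using \<open>j < n\<close> \<open>\<not> l < n\<close> l unfolding Lambda_def mident_def by auto
    ultimately show ?thesis using dual l by simp
  next
    assume "\<not> j < n" "l < n"
    moreover have "Lambda n j l = - mident l (j - n)"
      using \<open>\<not> j < n\<close> \<open>l < n\<close> j unfolding Lambda_def mident_def by auto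
    ultimately show ?thesis using dual j by (simp add: symp_cong_antisym)
  next
    assume "\<not> j < n" "\<not> l < n"
    then show ?thesis using iso_a j l by (simp add: Lambda_def)
  qed
qed

lemma lagrangian_completion:
  fixes d :: int
  assumes d: "d \<ge> 2" and ind: "lin_indep_mod d (2 * n) n a"
    and iso: "\<forall>i<n. \<forall>j<n. [symp n (a i) (a j) = 0] (mod d)"
  shows "\<exists>M. symplectic_mod d n M \<and> (\<forall>j<n. \<forall>i. M i (n + j) = a j i)"
proof -
  obtain b where "\<forall>k<n. \<forall>j<n. [symp n (b k) (a j) = mident k j] (mod d)"
    using symp_dual[OF d ind] by auto
  then obtain b' where "\<forall>k<n. \<forall>j<n. [symp n (b' k) (a j) = mident k j] (mod d)"
    and "\<forall>i<n. \<forall>k<n. [symp n (b' i) (b' k) = 0] (mod d)"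
    using isotropic_symp_dual[OF iso] by blast
  then have "symplectic_mod d n (\<lambda>i j. if j < n then b' j i else a (j - n) i)"
    using iso by (intro symplectic_mod_of_columns)
  then show ?thesis by fastforce
qed

definition append_family :: "nat \<Rightarrow> (nat \<Rightarrow> 'a) \<Rightarrow> (nat \<Rightarrow> 'a) \<Rightarrow> nat \<Rightarrow> 'a" where
  "append_family m a b j = (if j < m then a j else b (j - m))"

lemma sum_append_family:
  "(\<Sum>j<m + l. x j * f (append_family m a b j)) = (\<Sum>j<m. x j * f (a j)) + (\<Sum>j<l. x (m + j) * f (b j))"
  unfolding sum_lessThan_add append_family_def by simp

lemma lin_indep_mod_append_symp_dual:
  assumes ind: "lin_indep_mod d (2 * n) r a"
    and iso: "\<forall>i<r. \<forall>j<r. [symp n (a i) (a j) = 0] (mod d)"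
    and dual: "\<forall>k<r. \<forall>j<r. [symp n (b k) (a j) = mident k j] (mod d)"
  shows "lin_indep_mod d (2 * n) (r + r) (append_family r a b)"
  unfolding lin_indep_mod_def
proof (intro allI impI)
  fix x j
  assume h: "\<forall>t<2 * n. [(\<Sum>j<r + r. x j * append_family r a b j t) = 0] (mod d)" and j: "j < r + r"
  define u where "u t = (\<Sum>j<r + r. x j * append_family r a b j t)" for t
  have xb: "[x (r + k) = 0] (mod d)" if k: "k < r" for k
  proof -
    have "[symp n u (a k) = (\<Sum>j<r. x j * 0) + (\<Sum>j<r. x (r + j) * mident j k)] (mod d)"
      unfolding u_def symp_sum_left sum_append_family[where f = "\<lambda>v. symp n v (a k)"]
      using iso dual k by (intro cong_add cong_sum cong_mult) auto
    then have "[symp n u (a k) = x (r + k)] (mod d)"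
      using k by (simp add: sum_mult_mident_left)
    moreover have "[symp n u (a k) = symp n (\<lambda>t. 0) (a k)] (mod d)"
      using h unfolding u_def by (intro symp_cong) auto
    then have "[symp n u (a k) = 0] (mod d)" by (simp add: symp_def)
    ultimately show ?thesis using cong_sym cong_trans by blast
  qed
  have "[(\<Sum>j<r. x j * a j t) = 0] (mod d)" if t: "t < 2 * n" for t
  proof -
    have "[(\<Sum>j<r + r. x j * append_family r a b j t) = 0] (mod d)"
      using h t by blast
    then have sum0: "[(\<Sum>j<r. x j * a j t) + (\<Sum>j<r. x (r + j) * b j t) = 0] (mod d)"
      unfolding sum_append_family[where f = "\<lambda>v. v t"] .
    have "[(\<Sum>j<r. x (r + j) * b j t) = (\<Sum>j<r. 0 * b j t)] (mod d)"
      using xb by (intro cong_sum cong_mult) auto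
    then have "[(\<Sum>j<r. x j * a j t) + (\<Sum>j<r. x (r + j) * b j t) = (\<Sum>j<r. x j * a j t) + 0] (mod d)"
      by (intro cong_add) simp_all
    from cong_trans[OF cong_sym[OF this] sum0] show ?thesis by simp
  qed
  then have "[x j' = 0] (mod d)" if "j' < r" for j'
    using lin_indep_modD[OF ind _ that] by blast
  then show "[x j = 0] (mod d)"
    using xb[of "j - r"] j by (cases "j < r") simp_all
qed

lemma lin_indep_mod_shear:
  assumes ind: "lin_indep_mod d N (Suc (m + l)) ((append_family m a b)(m + l := w))"
  shows "lin_indep_mod d N (Suc m) (a(m := (\<lambda>t. w t - (\<Sum>j<l. s j * b j t))))"
  unfolding lin_indep_mod_def
proof (intro allI impI)
  fix x j
  let ?v = "\<lambda>t. w t - (\<Sum>j<l. s j * b j t)"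
  assume h: "\<forall>t<N. [(\<Sum>j<Suc m. x j * (a(m := ?v)) j t) = 0] (mod d)" and j: "j < Suc m"
  define z where "z j = (if j < m then x j else if j < m + l then - (x m * s (j - m)) else x m)" for j
  have "(\<Sum>j<Suc (m + l). z j * ((append_family m a b)(m + l := w)) j t)
      = (\<Sum>j<Suc m. x j * (a(m := ?v)) j t)" for t
  proof -
    have "(\<Sum>j<Suc (m + l). z j * ((append_family m a b)(m + l := w)) j t)
        = (\<Sum>j<m. x j * a j t) + (\<Sum>j<l. - (x m * s j) * b j t) + x m * w t"
      using sum_append_family[where f = "\<lambda>v. v t" and x = z] by (simp add: z_def)
    also have "\<dots> = (\<Sum>j<Suc m. x j * (a(m := ?v)) j t)"
      by (simp add: right_diff_distrib sum_distrib_left sum_negf mult.assoc)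
    finally show ?thesis .
  qed
  then have z0: "[z j' = 0] (mod d)" if "j' < Suc (m + l)" for j'
    using lin_indep_modD[OF ind _ that, of z] h by simp
  show "[x j = 0] (mod d)"
  proof (cases "j < m")
    case True
    then show ?thesis using z0[of j] by (simp add: z_def)
  next
    case False
    with j have "j = m" by simp
    then show ?thesis using z0[of "m + l"] by (simp add: z_def)
  qed
qed

text \<open>Extend the family \<open>a, b\<close>, with \<open>b\<close> symplectically dual to \<open>a\<close>, by some \<open>w\<close>, then
  subtract from \<open>w\<close> its components along the \<open>b j\<close> to make it orthogonal to every \<open>a k\<close>.\<close>

lemma isotropic_extend:
  fixes d :: int
  assumes d: "d \<ge> 2" and r: "r < n" and ind: "lin_indep_mod d (2 * n) r a"
    and iso: "\<forall>i<r. \<forall>j<r. [symp n (a i) (a j) = 0] (mod d)"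
  shows "\<exists>v. lin_indep_mod d (2 * n) (Suc r) (a(r := v)) \<and>
             (\<forall>i<Suc r. \<forall>j<Suc r. [symp n ((a(r := v)) i) ((a(r := v)) j) = 0] (mod d))"
proof -
  obtain b where dual: "\<forall>k<r. \<forall>j<r. [symp n (b k) (a j) = mident k j] (mod d)"
    using symp_dual[OF d ind] r by auto
  have "d \<ge> 1" "r + r < 2 * n" using d r by auto
  then obtain w where w: "lin_indep_mod d (2 * n) (Suc (r + r)) ((append_family r a b)(r + r := w))"
    using lin_indep_mod_extend lin_indep_mod_append_symp_dual[OF ind iso dual] by blast
  define v where "v t = w t - (\<Sum>j<r. symp n w (a j) * b j t)" for t
  have ind': "lin_indep_mod d (2 * n) (Suc r) (a(r := v))"
    unfolding v_def using lin_indep_mod_shear[OF w] .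
  have va: "[symp n v (a k) = 0] (mod d)" if k: "k < r" for k
  proof -
    have "[symp n v (a k) = symp n w (a k) - (\<Sum>j<r. symp n w (a j) * mident j k)] (mod d)"
      unfolding v_def symp_diff_left symp_sum_left
      using dual k by (intro cong_diff cong_sum cong_mult) auto
    then show ?thesis using k by (simp add: sum_mult_mident_left)
  qed
  have "[symp n ((a(r := v)) i) ((a(r := v)) j) = 0] (mod d)"
    if ij: "i < Suc r" "j < Suc r" for i j
  proof -
    consider "i = r" "j = r" | "i = r" "j < r" | "i < r" "j = r" | "i < r" "j < r"
      using ij by (auto simp: less_Suc_eq)
    then show ?thesis
    proof cases
      case 3
      then show ?thesis using symp_cong_antisym[OF va[OF \<open>i < r\<close>]] by simp
    qed (use iso va in simp_all)
  qed
  with ind' show ?thesis by blast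
qed

lemma isotropic_completion:
  fixes d :: int
  assumes d: "d \<ge> 2" and "r \<le> n" and "lin_indep_mod d (2 * n) r a"
    and "\<forall>i<r. \<forall>j<r. [symp n (a i) (a j) = 0] (mod d)"
  shows "\<exists>M. symplectic_mod d n M \<and> (\<forall>j<r. \<forall>i. M i (n + j) = a j i)"
  using assms(2-4)
proof (induction r arbitrary: a rule: inc_induct)
  case base
  then show ?case by (rule lagrangian_completion[OF d])
next
  case (step r)
  obtain v where "lin_indep_mod d (2 * n) (Suc r) (a(r := v))"
    "\<forall>i<Suc r. \<forall>j<Suc r. [symp n ((a(r := v)) i) ((a(r := v)) j) = 0] (mod d)"
    using isotropic_extend[OF d step.hyps(2) step.prems] by blast
  then obtain M where "symplectic_mod d n M" "\<forall>j<Suc r. \<forall>i. M i (n + j) = (a(r := v)) j i"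
    using step.IH by blast
  then show ?case by (intro exI[of _ M]) auto
qed

section \<open>The symplectic group\<close>

lemma mmul_mtrans_Lambda_Lambda:
  assumes "i < 2 * n" "j < 2 * n"
  shows "mmul (2 * n) (mtrans (Lambda n)) (Lambda n) i j = mident i j"
proof -
  have "mtrans (Lambda n) i l = - Lambda n i l" for l
    unfolding mtrans_def Lambda_def by auto
  then have "mmul (2 * n) (mtrans (Lambda n)) (Lambda n) i j = - Lambda_vec n (\<lambda>l. Lambda n l j) i"
    unfolding mmul_def using sum_Lambda_mult[OF assms(1)] by (simp add: sum_negf)
  also have "\<dots> = mident i j"
    using assms unfolding Lambda_vec_def Lambda_def mident_def by auto
  finally show ?thesis .
qed

lemma symplectic_mod_cong:
  assumes "meq_mod d (2 * n) A B" "symplectic_mod d n B"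
  shows "symplectic_mod d n A"
proof -
  have "meq_mod d (2 * n) (mmul (2 * n) (mtrans A) (mmul (2 * n) (Lambda n) A))
                          (mmul (2 * n) (mtrans B) (mmul (2 * n) (Lambda n) B))"
    using assms(1) by (intro meq_mod_mmul meq_mod_mtrans meq_mod_refl)
  with assms(2) show ?thesis unfolding symplectic_mod_def by (blast intro: meq_mod_trans)
qed

lemma mat_mod_in_Sp: "d > 0 \<Longrightarrow> symplectic_mod d n A \<Longrightarrow> mat_mod d (2 * n) A \<in> Sp d n"
  unfolding Sp_iff by (blast intro: mat_mod_in_mats symplectic_mod_cong meq_mod_mat_mod)

lemma symplectic_mod_mident: "symplectic_mod d n mident"
  unfolding symplectic_mod_def mtrans_mident
  using meq_mod_trans[OF meq_mod_mmul_mident_left meq_mod_mmul_mident_right] .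

lemma symplectic_mod_mmul:
  assumes A: "symplectic_mod d n A" and B: "symplectic_mod d n B"
  shows "symplectic_mod d n (mmul (2 * n) A B)"
proof -
  let ?N = "2 * n"
  have "meq_mod d ?N (mmul ?N (mtrans (mmul ?N A B)) (mmul ?N (Lambda n) (mmul ?N A B)))
      (mmul ?N (mtrans B) (mmul ?N (mmul ?N (mtrans A) (mmul ?N (Lambda n) A)) B))"
    by (simp add: mtrans_mmul mmul_assoc)
  also have "meq_mod d ?N \<dots> (mmul ?N (mtrans B) (mmul ?N (Lambda n) B))"
    using A unfolding symplectic_mod_def by (intro meq_mod_mmul meq_mod_refl)
  also have "meq_mod d ?N \<dots> (Lambda n)"
    using B unfolding symplectic_mod_def .
  finally show ?thesis unfolding symplectic_mod_def .
qed

text \<open>A symplectic \<open>M\<close> has the left inverse \<open>\<Lambda>\<^sup>T M\<^sup>T \<Lambda>\<close>, which is then also a right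
  inverse and again symplectic.\<close>

lemma symplectic_mod_inverse:
  assumes d: "d \<ge> 2" and M: "symplectic_mod d n M"
  obtains U where "meq_mod d (2 * n) (mmul (2 * n) M U) mident"
    "meq_mod d (2 * n) (mmul (2 * n) U M) mident" "symplectic_mod d n U"
proof -
  let ?N = "2 * n"
  define U where "U = mmul ?N (mtrans (Lambda n)) (mmul ?N (mtrans M) (Lambda n))"
  have "meq_mod d ?N (mmul ?N U M) (mmul ?N (mtrans (Lambda n)) (mmul ?N (mtrans M) (mmul ?N (Lambda n) M)))"
    unfolding U_def by (simp add: mmul_assoc)
  also have "meq_mod d ?N \<dots> (mmul ?N (mtrans (Lambda n)) (Lambda n))"
    using M unfolding symplectic_mod_def by (intro meq_mod_mmul meq_mod_refl)
  also have "meq_mod d ?N \<dots> mident"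
    unfolding meq_mod_def by (simp add: mmul_mtrans_Lambda_Lambda)
  finally have UM: "meq_mod d ?N (mmul ?N U M) mident" .
  then have MU: "meq_mod d ?N (mmul ?N M U) mident"
    by (rule right_inverse_imp_left_inverse[OF d])
  have "meq_mod d ?N (mmul ?N (mtrans U) (mmul ?N (Lambda n) U))
      (mmul ?N (mtrans U) (mmul ?N (mmul ?N (mtrans M) (mmul ?N (Lambda n) M)) U))"
    using meq_mod_sym[OF M[unfolded symplectic_mod_def]] by (intro meq_mod_mmul meq_mod_refl)
  also have "meq_mod d ?N \<dots> (mmul ?N (mtrans (mmul ?N M U)) (mmul ?N (Lambda n) (mmul ?N M U)))"
    by (simp add: mtrans_mmul mmul_assoc)
  also have "meq_mod d ?N \<dots> (mmul ?N (mtrans mident) (mmul ?N (Lambda n) mident))"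
    using MU by (intro meq_mod_mmul meq_mod_mtrans meq_mod_refl)
  also have "meq_mod d ?N \<dots> (Lambda n)"
    using symplectic_mod_mident unfolding symplectic_mod_def .
  finally have "symplectic_mod d n U" unfolding symplectic_mod_def .
  with MU UM show ?thesis by (rule that)
qed

section \<open>The orbit map onto stabilizer codes\<close>

lemma span_mod_cong:
  assumes "\<forall>j<m. \<forall>i<N. [a j i = a' j i] (mod d)"
  shows "span_mod d N m a = span_mod d N m a'"
proof -
  have "[(\<Sum>j<m. x j * a j i) = (\<Sum>j<m. x j * a' j i)] (mod d)" if "i < N" for x i
    using assms that by (intro cong_sum cong_mult) auto
  have "v \<in> span_mod d N m a \<longleftrightarrow> v \<in> span_mod d N m a'" for v
  proof -
    have "[v i = (\<Sum>j<m. x j * a j i)] (mod d) \<longleftrightarrow> [v i = (\<Sum>j<m. x j * a' j i)] (mod d)"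
      if "i < N" for x i
      using cong_trans[OF _ \<open>i < N \<Longrightarrow> [(\<Sum>j<m. x j * a j i) = (\<Sum>j<m. x j * a' j i)] (mod d)\<close>]
        cong_trans[OF _ cong_sym[OF \<open>i < N \<Longrightarrow> [(\<Sum>j<m. x j * a j i) = (\<Sum>j<m. x j * a' j i)] (mod d)\<close>]]
        that by blast
    then show ?thesis unfolding span_mod_def by auto
  qed
  then show ?thesis by blast
qed

lemma span_mod_subsetI:
  assumes "\<forall>j<m. \<exists>y. \<forall>i<N. [a j i = (\<Sum>l<m'. y l * b l i)] (mod d)"
  shows "span_mod d N m a \<subseteq> span_mod d N m' b"
proof
  fix v assume "v \<in> span_mod d N m a"
  then obtain x where v: "v \<in> vecs d N" and x: "\<forall>i<N. [v i = (\<Sum>j<m. x j * a j i)] (mod d)"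
    unfolding span_mod_def by blast
  from assms obtain Y where Y: "\<And>j i. j < m \<Longrightarrow> i < N \<Longrightarrow> [a j i = (\<Sum>l<m'. Y j l * b l i)] (mod d)"
    by metis
  have "[v i = (\<Sum>l<m'. (\<Sum>j<m. x j * Y j l) * b l i)] (mod d)" if i: "i < N" for i
  proof -
    have "[v i = (\<Sum>j<m. x j * a j i)] (mod d)" using x i by blast
    also have "[(\<Sum>j<m. x j * a j i) = (\<Sum>j<m. x j * (\<Sum>l<m'. Y j l * b l i))] (mod d)"
      using Y i by (intro cong_sum cong_mult) auto
    also have "(\<Sum>j<m. x j * (\<Sum>l<m'. Y j l * b l i)) = (\<Sum>l<m'. (\<Sum>j<m. x j * Y j l) * b l i)"
      unfolding sum_distrib_left sum_distrib_right mult.assoc by (rule sum.swap)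
    finally show ?thesis .
  qed
  with v show "v \<in> span_mod d N m' b"
    unfolding span_mod_def by (auto intro!: exI[of _ "\<lambda>l. \<Sum>j<m. x j * Y j l"])
qed

lemma span_mod_subsetD:
  assumes sub: "span_mod d N m a \<subseteq> span_mod d N m' b" and j: "j < m" and d: "d > 0"
  shows "\<exists>y. \<forall>i<N. [a j i = (\<Sum>l<m'. y l * b l i)] (mod d)"
proof -
  define v where "v i = (if i < N then a j i mod d else 0)" for i
  have "[v i = (\<Sum>l<m. mident l j * a l i)] (mod d)" if "i < N" for i
    using that j sum_mult_mident_left[OF j, of "\<lambda>l. a l i"]
    by (simp add: v_def mult.commute cong_def)
  moreover have "v \<in> vecs d N" using d unfolding v_def vecs_def by auto
  ultimately have "v \<in> span_mod d N m a"
    unfolding span_mod_def by (auto intro!: exI[of _ "\<lambda>l. mident l j"])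
  then have "v \<in> span_mod d N m' b" using sub by blast
  then obtain y where y: "\<forall>i<N. [v i = (\<Sum>l<m'. y l * b l i)] (mod d)"
    unfolding span_mod_def by blast
  have "[a j i = (\<Sum>l<m'. y l * b l i)] (mod d)" if "i < N" for i
  proof -
    have "[a j i = v i] (mod d)" using that unfolding v_def by (simp add: cong_def)
    with y that show ?thesis using cong_trans by blast
  qed
  then show ?thesis by blast
qed

lemma span_mod_mult_mono:
  assumes "span_mod d N m a \<subseteq> span_mod d N m' b" and "d > 0"
  shows "span_mod d N m (\<lambda>j i. \<Sum>t<N. G i t * a j t) \<subseteq> span_mod d N m' (\<lambda>j i. \<Sum>t<N. G i t * b j t)"
proof (rule span_mod_subsetI, intro allI impI)
  fix j assume "j < m"
  then obtain y where y: "\<forall>i<N. [a j i = (\<Sum>l<m'. y l * b l i)] (mod d)"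
    using span_mod_subsetD assms by blast
  have "[(\<Sum>t<N. G i t * a j t) = (\<Sum>l<m'. y l * (\<Sum>t<N. G i t * b l t))] (mod d)" for i
  proof -
    have "[(\<Sum>t<N. G i t * a j t) = (\<Sum>t<N. G i t * (\<Sum>l<m'. y l * b l t))] (mod d)"
      using y by (intro cong_sum cong_mult) auto
    also have "(\<Sum>t<N. G i t * (\<Sum>l<m'. y l * b l t)) = (\<Sum>l<m'. y l * (\<Sum>t<N. G i t * b l t))"
      unfolding sum_distrib_left mult.left_commute[of "G i _"] by (rule sum.swap)
    finally show ?thesis .
  qed
  then show "\<exists>y. \<forall>i<N. [(\<Sum>t<N. G i t * a j t) = (\<Sum>l<m'. y l * (\<Sum>t<N. G i t * b l t))] (mod d)"
    by blast
qed

lemma lin_indep_mod_columns: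
  assumes inj: "mat_inj_mod d N M" and "s + r \<le> N"
  shows "lin_indep_mod d N r (\<lambda>j i. M i (s + j))"
  unfolding lin_indep_mod_def
proof (intro allI impI)
  fix x j assume h: "\<forall>i<N. [(\<Sum>j<r. x j * M i (s + j)) = 0] (mod d)" and j: "j < r"
  define x' where "x' l = (if s \<le> l \<and> l < s + r then x (l - s) else 0)" for l
  have "(\<Sum>l<N. M i l * x' l) = (\<Sum>l\<in>{s..<s + r}. M i l * x (l - s))" for i
    unfolding x'_def using assms(2) by (intro sum.mono_neutral_cong_right) auto
  also have "\<dots> i = (\<Sum>j<r. x j * M i (s + j))" for i
    by (simp add: sum.atLeastLessThan_shift_0[of _ s] mult.commute atLeast0LessThan)
  finally have "\<forall>i<N. [(\<Sum>l<N. M i l * x' l) = 0] (mod d)" using h by simp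
  then have "[x' (s + j) = 0] (mod d)"
    using mat_inj_modD[OF inj] j assms(2) by simp
  then show "[x j = 0] (mod d)" using j unfolding x'_def by simp
qed

text \<open>\<open>code_of d n r M\<close> is the code \<open>M C\<^sub>0\<close> of the paper, spanned by the columns
  \<open>n, \<dots>, n + r - 1\<close> of \<open>M\<close>; the standard code \<open>C\<^sub>0\<close> is \<open>code_of d n r mident\<close>.\<close>

definition code_of :: "int \<Rightarrow> nat \<Rightarrow> nat \<Rightarrow> (nat \<Rightarrow> nat \<Rightarrow> int) \<Rightarrow> (nat \<Rightarrow> int) set" where
  "code_of d n r M = span_mod d (2 * n) r (\<lambda>j i. M i (n + j))"

lemma code_of_cong:
  assumes "r \<le> n" "meq_mod d (2 * n) A B"
  shows "code_of d n r A = code_of d n r B"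
  unfolding code_of_def using assms by (intro span_mod_cong) (auto simp: meq_mod_def)

lemma code_of_mat_mod: "r \<le> n \<Longrightarrow> code_of d n r (mat_mod d (2 * n) A) = code_of d n r A"
  using code_of_cong meq_mod_mat_mod by blast

lemma code_of_mmul_eq:
  assumes "code_of d n r X = code_of d n r Y" "d > 0"
  shows "code_of d n r (mmul (2 * n) G X) = code_of d n r (mmul (2 * n) G Y)"
  using assms span_mod_mult_mono[of d "2 * n" r "\<lambda>j t. X t (n + j)" r "\<lambda>j t. Y t (n + j)" G]
    span_mod_mult_mono[of d "2 * n" r "\<lambda>j t. Y t (n + j)" r "\<lambda>j t. X t (n + j)" G]
  unfolding code_of_def mmul_def by auto

lemma code_of_mident: "code_of d n r mident = span_mod d (2 * n) r (\<lambda>j. unit_vec (n + j))"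
proof -
  have "(\<lambda>j i. mident i (n + j)) = (\<lambda>j. unit_vec (n + j))"
    unfolding mident_def unit_vec_def by (auto intro!: ext)
  then show ?thesis unfolding code_of_def by simp
qed

lemma code_of_in_stab_codes:
  assumes d: "d \<ge> 2" and M: "M \<in> Sp d n"
  shows "code_of d n (n - k) M \<in> stab_codes n k d"
proof -
  let ?a = "\<lambda>j i. M i (n + j)"
  have Mm: "M \<in> mats d (2 * n)" and MS: "symplectic_mod d n M" using M unfolding Sp_iff by auto
  obtain U where "meq_mod d (2 * n) (mmul (2 * n) U M) mident"
    using symplectic_mod_inverse[OF d MS] by blast
  then have "lin_indep_mod d (2 * n) (n - k) ?a"
    by (intro lin_indep_mod_columns left_inverse_imp_mat_inj_mod) auto
  moreover have "\<forall>j<n - k. ?a j \<in> vecs d (2 * n)"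
    using Mm unfolding mats_def vecs_def by auto
  moreover have "[symp n (?a i) (?a j) = 0] (mod d)" if "i < n - k" "j < n - k" for i j
  proof -
    have "n + i < 2 * n" "n + j < 2 * n" using that by auto
    then have "[symp n (?a i) (?a j) = Lambda n (n + i) (n + j)] (mod d)"
      using MS unfolding symplectic_mod_iff_symp by blast
    then show ?thesis by (simp add: Lambda_def)
  qed
  ultimately show ?thesis unfolding stab_codes_def code_of_def by blast
qed

lemma code_of_surj:
  assumes d: "d \<ge> 2" and C: "C \<in> stab_codes n k d"
  shows "\<exists>M\<in>Sp d n. code_of d n (n - k) M = C"
proof -
  obtain a where Ca: "C = span_mod d (2 * n) (n - k) a" and ind: "lin_indep_mod d (2 * n) (n - k) a"
    and iso: "\<forall>i<n - k. \<forall>j<n - k. [symp n (a i) (a j) = 0] (mod d)"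
    using C unfolding stab_codes_def by blast
  obtain M where M: "symplectic_mod d n M" and col: "\<forall>j<n - k. \<forall>i. M i (n + j) = a j i"
    using isotropic_completion[OF d _ ind iso] by auto
  have "mat_mod d (2 * n) M \<in> Sp d n" using d M by (intro mat_mod_in_Sp) auto
  moreover have "code_of d n (n - k) (mat_mod d (2 * n) M) = code_of d n (n - k) M"
    by (rule code_of_mat_mod) simp
  moreover have "code_of d n (n - k) M = C"
    unfolding Ca code_of_def using col by (intro span_mod_cong) auto
  ultimately show ?thesis by blast
qed

section \<open>The stabilizer of the standard code\<close>

lemma right_inverse_imp_gl_mod:
  assumes d: "d \<ge> 2" and A: "A \<in> mats d m" and AB: "meq_mod d m (mmul m A B) mident"
  shows "A \<in> gl_mod d m"
proof -
  have "meq_mod d m (mmul m A (mat_mod d m B)) mident"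
    using meq_mod_trans[OF meq_mod_mmul[OF meq_mod_refl meq_mod_mat_mod] AB] .
  moreover from this have "meq_mod d m (mmul m (mat_mod d m B) A) mident"
    by (rule right_inverse_imp_left_inverse[OF d])
  moreover have "mat_mod d m B \<in> mats d m" using d by (intro mat_mod_in_mats) simp
  ultimately show ?thesis using A unfolding gl_mod_def by blast
qed

lemma sum_mult_unit_vec_shift:
  "(\<Sum>l<r. f l * unit_vec (n + l) i) = (if n \<le> i \<and> i < n + r then f (i - n) else (0::int))"
proof -
  have "(\<Sum>l<r. f l * unit_vec (n + l) i) = (\<Sum>l<r. if l = i - n \<and> n \<le> i then f l else 0)"
    unfolding unit_vec_def by (intro sum.cong) auto
  also have "\<dots> = (if n \<le> i \<and> i < n + r then f (i - n) else 0)"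
    by (auto simp: sum.delta')
  finally show ?thesis .
qed

lemma code_of_subset_std_if_block_columns:
  assumes col: "\<And>i j. i < 2 * n \<Longrightarrow> j < r \<Longrightarrow> X i (n + j) = (if n \<le> i \<and> i < n + r then A (i - n) j else 0)"
  shows "code_of d n r X \<subseteq> code_of d n r mident"
  unfolding code_of_mident unfolding code_of_def
proof (rule span_mod_subsetI, intro allI impI)
  fix j assume "j < r"
  then have "\<forall>i<2 * n. [X i (n + j) = (\<Sum>l<r. A l j * unit_vec (n + l) i)] (mod d)"
    using col by (simp add: sum_mult_unit_vec_shift)
  then show "\<exists>y. \<forall>i<2 * n. [X i (n + j) = (\<Sum>l<r. y l * unit_vec (n + l) i)] (mod d)"
    by (intro exI[of _ "\<lambda>l. A l j"])
qed

lemma std_subset_code_of_if_block_columns: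
  assumes col: "\<And>i j. i < 2 * n \<Longrightarrow> j < r \<Longrightarrow> X i (n + j) = (if n \<le> i \<and> i < n + r then A (i - n) j else 0)"
    and AB: "meq_mod d r (mmul r A B) mident"
  shows "code_of d n r mident \<subseteq> code_of d n r X"
  unfolding code_of_mident unfolding code_of_def
proof (rule span_mod_subsetI, intro allI impI)
  fix j assume j: "j < r"
  have "[unit_vec (n + j) i = (\<Sum>l<r. B l j * X i (n + l))] (mod d)" if i: "i < 2 * n" for i
  proof (cases "n \<le> i \<and> i < n + r")
    case True
    have "(\<Sum>l<r. B l j * X i (n + l)) = mmul r A B (i - n) j"
      unfolding mmul_def using col i True by (intro sum.cong) auto
    moreover have "[mmul r A B (i - n) j = mident (i - n) j] (mod d)"
      using AB True j unfolding meq_mod_def by auto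
    moreover have "mident (i - n) j = unit_vec (n + j) i"
      using True unfolding mident_def unit_vec_def by auto
    ultimately show ?thesis by (simp add: cong_sym)
  next
    case False
    have "X i (n + l) = 0" if "l < r" for l using col[OF i that] False by auto
    moreover have "unit_vec (n + j) i = 0" using False j by (auto simp: unit_vec_def)
    ultimately show ?thesis by simp
  qed
  then show "\<exists>y. \<forall>i<2 * n. [unit_vec (n + j) i = (\<Sum>l<r. y l * X i (n + l))] (mod d)"
    by (intro exI[of _ "\<lambda>l. B l j"]) blast
qed

lemma T_set_imp_code_of:
  assumes X: "X \<in> T_set n k d"
  shows "code_of d n (n - k) X = code_of d n (n - k) mident"
proof -
  let ?r = "n - k"
  have zero: "\<forall>i<2 * n. \<forall>j. n \<le> j \<and> j < n + ?r \<and> \<not> (n \<le> i \<and> i < n + ?r) \<longrightarrow> X i j = 0"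
    using X unfolding T_set_def by blast
  obtain A where A: "A \<in> gl_mod d ?r" and block: "\<forall>i<?r. \<forall>j<?r. X (n + i) (n + j) = A i j"
    using X unfolding T_set_def by blast
  obtain B where AB: "meq_mod d ?r (mmul ?r A B) mident" using A unfolding gl_mod_def by blast
  have col: "X i (n + j) = (if n \<le> i \<and> i < n + ?r then A (i - n) j else 0)" if "i < 2 * n" "j < ?r" for i j
    using zero block[rule_format, of "i - n" j] that by auto
  have "code_of d n ?r X \<subseteq> code_of d n ?r mident"
    by (rule code_of_subset_std_if_block_columns) (use col in simp)
  moreover have "code_of d n ?r mident \<subseteq> code_of d n ?r X"
    by (rule std_subset_code_of_if_block_columns[OF _ AB]) (use col in simp)
  ultimately show ?thesis by blast
qed

lemma code_of_subset_std_imp_zero: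
  assumes X: "X \<in> mats d (2 * n)" and sub: "code_of d n r X \<subseteq> code_of d n r mident"
    and d: "d > 0" and r: "r \<le> n"
  shows "\<forall>i<2 * n. \<forall>j. n \<le> j \<and> j < n + r \<and> \<not> (n \<le> i \<and> i < n + r) \<longrightarrow> X i j = 0"
proof (intro allI impI)
  fix i j assume i: "i < 2 * n" and j: "n \<le> j \<and> j < n + r \<and> \<not> (n \<le> i \<and> i < n + r)"
  then have "j - n < r" by auto
  then have "\<exists>y. \<forall>i<2 * n. [X i (n + (j - n)) = (\<Sum>l<r. y l * unit_vec (n + l) i)] (mod d)"
    by (rule span_mod_subsetD[OF sub[unfolded code_of_mident, unfolded code_of_def] _ d])
  then obtain y where "\<forall>i<2 * n. [X i (n + (j - n)) = (\<Sum>l<r. y l * unit_vec (n + l) i)] (mod d)" ..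
  then have "[X i j = 0] (mod d)" using i j by (auto simp: sum_mult_unit_vec_shift)
  moreover have "j < 2 * n" using j r by linarith
  ultimately show "X i j = 0" using mats_cong_0_imp_eq_0[OF X i] by simp
qed

lemma std_subset_code_of_imp_right_inverse:
  assumes sub: "code_of d n r mident \<subseteq> code_of d n r X" and d: "d > 0" and r: "r \<le> n"
  shows "\<exists>B. meq_mod d r (mmul r (\<lambda>i j. if i < r \<and> j < r then X (n + i) (n + j) else 0) B) mident"
proof -
  have "\<forall>j. \<exists>y. j < r \<longrightarrow> (\<forall>i<2 * n. [unit_vec (n + j) i = (\<Sum>l<r. y l * X i (n + l))] (mod d))"
  proof
    fix j
    show "\<exists>y. j < r \<longrightarrow> (\<forall>i<2 * n. [unit_vec (n + j) i = (\<Sum>l<r. y l * X i (n + l))] (mod d))"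
      using span_mod_subsetD[OF sub[unfolded code_of_mident, unfolded code_of_def] _ d, of j] by auto
  qed
  then obtain Y where Y: "\<And>j i. j < r \<Longrightarrow> i < 2 * n \<Longrightarrow> [unit_vec (n + j) i = (\<Sum>l<r. Y j l * X i (n + l))] (mod d)"
    by metis
  have "[mmul r (\<lambda>i j. if i < r \<and> j < r then X (n + i) (n + j) else 0) (\<lambda>l j. Y j l) i j = mident i j] (mod d)"
    if "i < r" "j < r" for i j
  proof -
    have "mmul r (\<lambda>i j. if i < r \<and> j < r then X (n + i) (n + j) else 0) (\<lambda>l j. Y j l) i j
        = (\<Sum>l<r. Y j l * X (n + i) (n + l))"
      unfolding mmul_def using that by (intro sum.cong) auto
    moreover have "[unit_vec (n + j) (n + i) = (\<Sum>l<r. Y j l * X (n + i) (n + l))] (mod d)"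
      using Y that r by simp
    moreover have "unit_vec (n + j) (n + i) = mident i j" unfolding unit_vec_def mident_def by auto
    ultimately show ?thesis by (simp add: cong_sym)
  qed
  then show ?thesis unfolding meq_mod_def by blast
qed

lemma symplectic_mod_block_pairing:
  assumes X: "symplectic_mod d n X" and r: "r \<le> n"
    and zero: "\<forall>i<2 * n. \<forall>j. n \<le> j \<and> j < n + r \<and> \<not> (n \<le> i \<and> i < n + r) \<longrightarrow> X i j = 0"
    and j: "j < 2 * n" and l: "l < r"
  shows "[(\<Sum>i<r. X i j * X (n + i) (n + l)) = mident j l] (mod d)"
proof -
  have "[symp n (\<lambda>i. X i j) (\<lambda>i. X i (n + l)) = Lambda n j (n + l)] (mod d)"
    using X j l r unfolding symplectic_mod_iff_symp by simp
  moreover have "Lambda n j (n + l) = mident j l"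
    using l r unfolding Lambda_def mident_def by auto
  moreover have "symp n (\<lambda>i. X i j) (\<lambda>i. X i (n + l)) = (\<Sum>i<n. if i < r then X i j * X (n + i) (n + l) else 0)"
    unfolding symp_eq using zero l r by (intro sum.cong) (auto simp: add.commute)
  moreover have "(\<Sum>i<n. if i < r then X i j * X (n + i) (n + l) else 0) = (\<Sum>i<r. X i j * X (n + i) (n + l))"
    using r by (intro sum.mono_neutral_cong_right) auto
  ultimately show ?thesis by simp
qed

lemma pairing_with_invertible_imp_rows_zero:
  assumes X: "X \<in> mats d N" and AB: "meq_mod d r (mmul r A B) mident"
    and pair: "\<And>j l. j < N \<Longrightarrow> l < r \<Longrightarrow> [(\<Sum>i<r. X i j * A i l) = mident j l] (mod d)"
  shows "\<forall>i<r. \<forall>j. r \<le> j \<and> j < N \<longrightarrow> X i j = 0"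
proof (intro allI impI)
  fix i j assume i: "i < r" and j: "r \<le> j \<and> j < N"
  have "meq_mod d r (mmul r (mtrans B) (mtrans A)) mident"
    using meq_mod_mtrans[OF AB] by (simp add: mtrans_mmul mtrans_mident)
  then have inj: "mat_inj_mod d r (mtrans A)" by (rule left_inverse_imp_mat_inj_mod)
  have "[(\<Sum>i<r. mtrans A l i * X i j) = 0] (mod d)" if "l < r" for l
    using pair[of j l] j that by (simp add: mtrans_def mult.commute mident_def)
  then have "[X i j = 0] (mod d)" using mat_inj_modD[OF inj, of "\<lambda>i. X i j"] i by blast
  then show "X i j = 0" using mats_cong_0_imp_eq_0[OF X] i j by simp
qed

lemma code_of_std_imp_T_set:
  assumes d: "d \<ge> 2" and X: "X \<in> Sp d n"
    and code: "code_of d n (n - k) X = code_of d n (n - k) mident"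
  shows "X \<in> T_set n k d"
proof -
  let ?r = "n - k"
  define A where "A i j = (if i < ?r \<and> j < ?r then X (n + i) (n + j) else 0)" for i j
  have Xm: "X \<in> mats d (2 * n)" and XS: "symplectic_mod d n X" using X unfolding Sp_iff by auto
  have d0: "d > 0" using d by simp
  have zero: "\<forall>i<2 * n. \<forall>j. n \<le> j \<and> j < n + ?r \<and> \<not> (n \<le> i \<and> i < n + ?r) \<longrightarrow> X i j = 0"
    by (rule code_of_subset_std_imp_zero[OF Xm _ d0]) (use code in simp_all)
  obtain B where AB: "meq_mod d ?r (mmul ?r A B) mident"
    using std_subset_code_of_imp_right_inverse[of d n ?r X] code d0 unfolding A_def by auto
  have "X i j \<in> {0..<d}" if "i < 2 * n" "j < 2 * n" for i j
    using Xm that unfolding mats_def by blast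
  then have "A \<in> mats d ?r" using d0 unfolding A_def mats_def by auto
  then have A: "A \<in> gl_mod d ?r" using right_inverse_imp_gl_mod[OF d _ AB] by blast
  have pair: "[(\<Sum>i<?r. X i j * A i l) = mident j l] (mod d)" if "j < 2 * n" "l < ?r" for j l
    using symplectic_mod_block_pairing[OF XS _ zero that] that unfolding A_def by simp
  have rows: "\<forall>i<?r. \<forall>j. ?r \<le> j \<and> j < 2 * n \<longrightarrow> X i j = 0"
    using pairing_with_invertible_imp_rows_zero[OF Xm AB pair] by simp
  have TA: "meq_mod d ?r (mmul ?r (mtrans A) X) mident"
    unfolding meq_mod_def
  proof (intro allI impI)
    fix l j assume "l < ?r" "j < ?r"
    then have "[(\<Sum>i<?r. X i j * A i l) = mident j l] (mod d)" using pair by simp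
    then show "[mmul ?r (mtrans A) X l j = mident l j] (mod d)"
      by (simp add: mmul_def mtrans_def mult.commute mident_def eq_commute)
  qed
  then have AT: "meq_mod d ?r (mmul ?r X (mtrans A)) mident"
    by (rule right_inverse_imp_left_inverse[OF d])
  have "\<forall>i<?r. \<forall>j<?r. X (n + i) (n + j) = A i j" by (simp add: A_def)
  with X zero rows A TA AT show ?thesis unfolding T_set_def by blast
qed

section \<open>Counting the fibres\<close>

lemma inj_on_mat_mod_mmul:
  assumes "meq_mod d m (mmul m U M0) mident"
  shows "inj_on (\<lambda>X. mat_mod d m (mmul m M0 X)) (mats d m)"
proof (rule inj_onI)
  fix X Y assume X: "X \<in> mats d m" and Y: "Y \<in> mats d m"
    and "mat_mod d m (mmul m M0 X) = mat_mod d m (mmul m M0 Y)"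
  then have "meq_mod d m (mmul m M0 X) (mmul m M0 Y)"
    using meq_mod_mat_mod[of d m "mmul m M0 X"] meq_mod_mat_mod[of d m "mmul m M0 Y"]
    by (metis meq_mod_sym meq_mod_trans)
  then have "meq_mod d m (mmul m U (mmul m M0 X)) (mmul m U (mmul m M0 Y))"
    by (rule meq_mod_mmul[OF meq_mod_refl])
  with meq_mod_mmul_cancel_left[OF assms] have "meq_mod d m X Y"
    by (blast intro: meq_mod_sym meq_mod_trans)
  then show "X = Y" using X Y by (intro meq_mod_imp_eq)
qed

lemma mat_mod_mmul_T_set_in_fibre:
  assumes d: "d > 0" and M0: "M0 \<in> Sp d n" and X: "X \<in> T_set n k d"
  shows "mat_mod d (2 * n) (mmul (2 * n) M0 X) \<in> {M \<in> Sp d n. code_of d n (n - k) M = code_of d n (n - k) M0}"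
proof -
  have "code_of d n (n - k) (mmul (2 * n) M0 X) = code_of d n (n - k) (mmul (2 * n) M0 mident)"
    using code_of_mmul_eq[OF T_set_imp_code_of[OF X] d] .
  also have "\<dots> = code_of d n (n - k) M0" by (intro code_of_cong) simp_all
  moreover have "mat_mod d (2 * n) (mmul (2 * n) M0 X) \<in> Sp d n"
    by (rule mat_mod_in_Sp[OF d symplectic_mod_mmul]) (use M0 X in \<open>auto simp: Sp_iff T_set_def\<close>)
  ultimately show ?thesis by (simp add: code_of_mat_mod)
qed

lemma fibre_subset_mat_mod_mmul_T_set:
  assumes d: "d \<ge> 2" and M0: "M0 \<in> Sp d n"
  shows "{M \<in> Sp d n. code_of d n (n - k) M = code_of d n (n - k) M0}
      \<subseteq> (\<lambda>X. mat_mod d (2 * n) (mmul (2 * n) M0 X)) ` T_set n k d"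
proof
  let ?N = "2 * n" and ?r = "n - k"
  fix M assume "M \<in> {M \<in> Sp d n. code_of d n ?r M = code_of d n ?r M0}"
  then have M: "M \<in> mats d ?N" "symplectic_mod d n M" and code: "code_of d n ?r M = code_of d n ?r M0"
    unfolding Sp_iff by auto
  have d0: "d > 0" using d by simp
  obtain U where M0U: "meq_mod d ?N (mmul ?N M0 U) mident" and UM0: "meq_mod d ?N (mmul ?N U M0) mident"
    and U: "symplectic_mod d n U"
    using symplectic_mod_inverse[OF d] M0 unfolding Sp_iff by blast
  define X where "X = mat_mod d ?N (mmul ?N U M)"
  have "X \<in> Sp d n" unfolding X_def using d0 U M by (intro mat_mod_in_Sp symplectic_mod_mmul)
  moreover have "code_of d n ?r X = code_of d n ?r (mmul ?N U M0)"
    unfolding X_def code_of_mat_mod[OF diff_le_self] using code_of_mmul_eq[OF code d0] .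
  moreover have "\<dots> = code_of d n ?r mident" using UM0 by (intro code_of_cong) simp_all
  ultimately have "X \<in> T_set n k d" using code_of_std_imp_T_set[OF d] by simp
  moreover have "meq_mod d ?N (mat_mod d ?N (mmul ?N M0 X)) M"
  proof -
    have "meq_mod d ?N (mat_mod d ?N (mmul ?N M0 X)) (mmul ?N M0 X)" by (rule meq_mod_mat_mod)
    also have "meq_mod d ?N (mmul ?N M0 X) (mmul ?N M0 (mmul ?N U M))"
      unfolding X_def by (rule meq_mod_mmul[OF meq_mod_refl meq_mod_mat_mod])
    also have "meq_mod d ?N (mmul ?N M0 (mmul ?N U M)) M" by (rule meq_mod_mmul_cancel_left[OF M0U])
    finally show ?thesis .
  qed
  then have "mat_mod d ?N (mmul ?N M0 X) = M"
    by (rule meq_mod_imp_eq[OF mat_mod_in_mats[OF d0] M(1)])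
  ultimately show "M \<in> (\<lambda>X. mat_mod d ?N (mmul ?N M0 X)) ` T_set n k d" by blast
qed

lemma code_of_fibre_bij:
  assumes d: "d \<ge> 2" and M0: "M0 \<in> Sp d n"
  shows "bij_betw (\<lambda>X. mat_mod d (2 * n) (mmul (2 * n) M0 X)) (T_set n k d)
           {M \<in> Sp d n. code_of d n (n - k) M = code_of d n (n - k) M0}"
proof -
  obtain U where "meq_mod d (2 * n) (mmul (2 * n) U M0) mident"
    using symplectic_mod_inverse[OF d] M0 unfolding Sp_iff by blast
  then have "inj_on (\<lambda>X. mat_mod d (2 * n) (mmul (2 * n) M0 X)) (T_set n k d)"
    by (rule inj_on_subset[OF inj_on_mat_mod_mmul]) (auto simp: T_set_def Sp_iff)
  moreover have "(\<lambda>X. mat_mod d (2 * n) (mmul (2 * n) M0 X)) ` T_set n k d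
      = {M \<in> Sp d n. code_of d n (n - k) M = code_of d n (n - k) M0}"
    using mat_mod_mmul_T_set_in_fibre[OF _ M0] fibre_subset_mat_mod_mmul_T_set[OF d M0] d by force
  ultimately show ?thesis unfolding bij_betw_def ..
qed

lemma mat_mod_mident_in_T_set:
  assumes d: "d \<ge> 2"
  shows "mat_mod d (2 * n) mident \<in> T_set n k d"
proof (rule code_of_std_imp_T_set[OF d])
  show "mat_mod d (2 * n) mident \<in> Sp d n"
    using d by (intro mat_mod_in_Sp symplectic_mod_mident) simp
  show "code_of d n (n - k) (mat_mod d (2 * n) mident) = code_of d n (n - k) mident"
    by (rule code_of_mat_mod) simp
qed

lemma card_eq_card_image_mult:
  assumes "finite S" and "\<And>y. y \<in> f ` S \<Longrightarrow> card {x \<in> S. f x = y} = m"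
  shows "card S = card (f ` S) * m"
proof -
  have "card S = (\<Sum>y\<in>f ` S. card {x \<in> S. f x = y})"
    unfolding card_eq_sum by (rule sum.image_gen[OF assms(1)])
  also have "\<dots> = card (f ` S) * m" using assms(2) by simp
  finally show ?thesis .
qed

theorem lemma1:
  fixes n k :: nat and d :: int
  assumes "d \<ge> 2" and "n \<ge> 1" and "k < n"
  shows "real (N_codes n k d) = real (card (Sp d n)) / real (card (T_set n k d))"
proof -
  note d = assms(1)
  let ?code = "code_of d n (n - k)"
  have fin: "finite (Sp d n)" by (rule finite_subset[OF _ finite_mats]) (auto simp: Sp_def)
  have codes: "?code ` Sp d n = stab_codes n k d"
    using code_of_in_stab_codes[OF d] code_of_surj[OF d] by blast
  have "card {M \<in> Sp d n. ?code M = C} = card (T_set n k d)" if "C \<in> ?code ` Sp d n" for C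
    using that bij_betw_same_card[OF code_of_fibre_bij[OF d]] by fastforce
  then have "card (Sp d n) = card (?code ` Sp d n) * card (T_set n k d)"
    by (rule card_eq_card_image_mult[OF fin])
  then have count: "card (Sp d n) = N_codes n k d * card (T_set n k d)"
    unfolding N_codes_def codes .
  have "finite (T_set n k d)"
    using fin by (rule finite_subset[rotated]) (auto simp: T_set_def)
  with mat_mod_mident_in_T_set[OF d] have "card (T_set n k d) > 0"
    by (auto simp: card_gt_0_iff)
  with count show ?thesis by simp
qed

end
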